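(* Let $\beta$ be generic and $x_k(t),y_k(t)$ smooth with $\dot x_k^2\ne1$, $\dot y_k^2\neq 1$, $\wp'(x_k),\wp'(y_k)\ne0$; put $u_k=\wp(x_k)$, $v_k=\wp(y_k)$. Then the system $$\frac{\dot x_k+1}{\dot x_k-1}=\frac{F(x_k,y_k;\beta)}{F(x_k,x_{k+1};\beta)},\qquad \frac{\dot y_k-1}{\dot y_k+1}=\frac{F(y_k,x_k;\beta)}{F(y_k,y_{k-1};\beta)}$$ is equivalent to $$\dot u_k=\frac{2\rho(u_{k+1},u_k,v_k;\beta)}{u_{k+1}-v_k},\qquad \dot v_k=\frac{2\rho(u_k,v_k,v_{k-1};\beta)}{u_k-v_{k-1}}.$$
   Context: $\wp,\sigma$: Weierstrass functions (invariants $g_2,g_3$, nondegenerate). $F(x_0,x_1;\alpha)=\frac{\sigma(x_0+x_1+\alpha)\sigma(x_0-x_1+\alpha)}{\sigma(x_0+x_1-\alpha)\sigma(x_0-x_1-\alpha)}$. For $u,w\in\mathbb C$ and $v=\wp(z)$ define $$\rho(u,v,w;\beta)=\frac{(\wp(z)-\wp(\beta))^2}{\wp'(\beta)}\Big(uw-\big(\wp(z+\beta)+\wp(z-\beta)\big)\frac{u+w}{2}+\wp(z+\beta)\wp(z-\beta)\Big)$$ (this depends on $z$ only through $v$; it is symmetric in $u,w$). *)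

theory Defs
  imports "HOL-Analysis.Analysis"
begin

definition lattice :: "complex \<Rightarrow> complex \<Rightarrow> complex set" where
  "lattice w1 w2 = {of_int m * w1 + of_int n * w2 | m n. True}"

definition lattice_nondeg :: "complex \<Rightarrow> complex \<Rightarrow> bool" where
  "lattice_nondeg w1 w2 \<longleftrightarrow> w1 \<noteq> 0 \<and> w2 \<noteq> 0 \<and> Im (w2 / w1) \<noteq> 0"

definition wp :: "complex \<Rightarrow> complex \<Rightarrow> complex \<Rightarrow> complex" where
  "wp w1 w2 z = 1 / z^2 + infsum (\<lambda>w. 1 / (z - w)^2 - 1 / w^2) (lattice w1 w2 - {0})"

definition wp' :: "complex \<Rightarrow> complex \<Rightarrow> complex \<Rightarrow> complex" where
  "wp' w1 w2 z = deriv (wp w1 w2) z"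

definition weierstrass_E2 :: "complex \<Rightarrow> complex" where
  "weierstrass_E2 t = (1 - t) * exp (t + t^2 / 2)"

text \<open>An enumeration of the nonzero lattice points; the (absolutely convergent)
  product does not depend on the choice.\<close>
definition lattice_enum :: "complex \<Rightarrow> complex \<Rightarrow> nat \<Rightarrow> complex" where
  "lattice_enum w1 w2 = (SOME f. bij_betw f UNIV (lattice w1 w2 - {0}))"

definition wsigma :: "complex \<Rightarrow> complex \<Rightarrow> complex \<Rightarrow> complex" where
  "wsigma w1 w2 z = z * prodinf (\<lambda>n. weierstrass_E2 (z / lattice_enum w1 w2 n))"

definition Fsig :: "complex \<Rightarrow> complex \<Rightarrow> complex \<Rightarrow> complex \<Rightarrow> complex \<Rightarrow> complex" where
  "Fsig w1 w2 x0 x1 \<alpha> =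
     (wsigma w1 w2 (x0 + x1 + \<alpha>) * wsigma w1 w2 (x0 - x1 + \<alpha>)) /
     (wsigma w1 w2 (x0 + x1 - \<alpha>) * wsigma w1 w2 (x0 - x1 - \<alpha>))"

definition Fsig_ok :: "complex \<Rightarrow> complex \<Rightarrow> complex \<Rightarrow> complex \<Rightarrow> complex \<Rightarrow> bool" where
  "Fsig_ok w1 w2 x0 x1 \<alpha> \<longleftrightarrow>
     wsigma w1 w2 (x0 + x1 + \<alpha>) \<noteq> 0 \<and> wsigma w1 w2 (x0 - x1 + \<alpha>) \<noteq> 0 \<and>
     wsigma w1 w2 (x0 + x1 - \<alpha>) \<noteq> 0 \<and> wsigma w1 w2 (x0 - x1 - \<alpha>) \<noteq> 0"

text \<open>rho(u, v, w; beta) with v = wp(z); the argument z is passed instead of v.\<close>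
definition rho :: "complex \<Rightarrow> complex \<Rightarrow> complex \<Rightarrow> complex \<Rightarrow> complex \<Rightarrow> complex \<Rightarrow> complex" where
  "rho w1 w2 u z w \<beta> =
     (wp w1 w2 z - wp w1 w2 \<beta>)^2 / wp' w1 w2 \<beta> *
     (u * w - (wp w1 w2 (z + \<beta>) + wp w1 w2 (z - \<beta>)) * (u + w) / 2
        + wp w1 w2 (z + \<beta>) * wp w1 w2 (z - \<beta>))"

definition tder :: "(real \<Rightarrow> complex) \<Rightarrow> real \<Rightarrow> complex" where
  "tder f t = vector_derivative f (at t)"

definition smooth_rc :: "(real \<Rightarrow> complex) \<Rightarrow> bool" where
  "smooth_rc f \<longleftrightarrow> (\<forall>n t. (tder ^^ n) f differentiable (at t))"

end

theory Submission
  imports Defs "HOL-Complex_Analysis.Complex_Analysis"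
begin

(* Liouville's theorem gives the addition formula
  \<sigma>(x+b) \<sigma>(x-b) = \<sigma>(x)^2 \<sigma>(b)^2 (\<wp>(b) - \<wp>(x)), which rewrites F(x0,x1;\<beta>) as
  \<sigma>(x0+\<beta>)^2 (\<wp>(x1) - \<wp>(x0+\<beta>)) / (\<sigma>(x0-\<beta>)^2 (\<wp>(x1) - \<wp>(x0-\<beta>))), so the right-hand
  sides of the first system are cross-ratios of \<wp>-values. Differentiating the addition formula
  twice gives \<wp>(x+\<beta>) - \<wp>(x-\<beta>) = -\<wp>'(x) \<wp>'(\<beta>) / (\<wp>(x) - \<wp>(\<beta>))^2, which accounts for the
  prefactor of \<rho>; since u_k' = \<wp>'(x_k) x_k', each equation of one system turns into the
  corresponding equation of the other after clearing denominators. "Generic" is taken to mean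
  that \<beta> is not a half period: the half periods form a discrete set, and off them \<wp>'(\<beta>) does
  not vanish. *)

section \<open>Counting lattice points\<close>

lemma lattice_norm_lower_bound:
  assumes "lattice_nondeg w1 w2"
  shows "\<exists>c>0. \<forall>s t::real. c * (\<bar>s\<bar> + \<bar>t\<bar>) \<le> norm (of_real s * w1 + of_real t * w2)"
proof -
  define \<tau> where "\<tau> = w2 / w1"
  define p where "p = Re \<tau>"
  define q where "q = Im \<tau>"
  have w1: "w1 \<noteq> 0" and q: "q \<noteq> 0" using assms by (auto simp: lattice_nondeg_def q_def \<tau>_def)
  define K where "K = 1 + (\<bar>p\<bar> + 1) / \<bar>q\<bar>"
  have K: "K > 0" unfolding K_def using q by (auto intro!: add_pos_nonneg)
  show ?thesis
  proof (intro exI[of _ "norm w1 / K"] conjI allI)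
    show "norm w1 / K > 0" using w1 K by auto
    fix s t :: real
    define z where "z = of_real s + of_real t * \<tau>"
    have eq: "of_real s * w1 + of_real t * w2 = w1 * z"
      using w1 by (simp add: z_def \<tau>_def field_simps)
    have Re_z: "Re z = s + t * p" and Im_z: "Im z = t * q" by (simp_all add: z_def p_def q_def)
    have "\<bar>t\<bar> * \<bar>q\<bar> \<le> norm z" using abs_Im_le_cmod[of z] Im_z by (simp add: abs_mult)
    hence "(\<bar>p\<bar> + 1) * \<bar>t\<bar> \<le> (\<bar>p\<bar> + 1) * (norm z / \<bar>q\<bar>)"
      using q by (intro mult_left_mono) (auto simp: field_simps)
    moreover have "\<bar>s\<bar> - \<bar>t\<bar> * \<bar>p\<bar> \<le> norm z"
      using abs_Re_le_cmod[of z] Re_z abs_triangle_ineq[of "s + t * p" "-(t * p)"] by (simp add: abs_mult)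
    moreover have "norm z * K = norm z + (\<bar>p\<bar> + 1) * (norm z / \<bar>q\<bar>)" using q by (simp add: K_def field_simps)
    ultimately have "\<bar>s\<bar> + \<bar>t\<bar> \<le> norm z * K" by (simp add: algebra_simps)
    hence "norm w1 * (\<bar>s\<bar> + \<bar>t\<bar>) \<le> norm w1 * (norm z * K)" by (rule mult_left_mono) simp
    thus "norm w1 / K * (\<bar>s\<bar> + \<bar>t\<bar>) \<le> norm (of_real s * w1 + of_real t * w2)"
      using K unfolding eq by (simp add: norm_mult field_simps)
  qed
qed

lemma sum_inverse_squares_le: "(\<Sum>k=1..n. 1 / (real k)^2) \<le> 2 - 1 / real n" if "n \<ge> 1"
  using that
proof (induction n rule: dec_induct)
  case (step n)
  have "1 / (real n + 1)^2 \<le> 1 / (real n * (real n + 1))"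
    using step by (intro divide_left_mono) (auto simp: power2_eq_square intro!: mult_right_mono)
  also have "\<dots> = 1 / real n - 1 / (real n + 1)" using step by (simp add: field_simps)
  finally show ?case using step by (simp add: add.commute)
qed simp

definition l1_sphere :: "nat \<Rightarrow> (int \<times> int) set" where
  "l1_sphere k = {(m, n). \<bar>m\<bar> + \<bar>n\<bar> = int k}"

lemma l1_sphere_subset:
  "l1_sphere k \<subseteq> (\<lambda>(m, s). (m, s * (int k - \<bar>m\<bar>))) ` ({-int k..int k} \<times> {-1, 1})"
proof
  fix p assume "p \<in> l1_sphere k"
  then obtain m n where p: "p = (m, n)" and e: "\<bar>m\<bar> + \<bar>n\<bar> = int k"
    by (auto simp: l1_sphere_def)
  show "p \<in> (\<lambda>(m, s). (m, s * (int k - \<bar>m\<bar>))) ` ({-int k..int k} \<times> {-1, 1})"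
    using e p by (intro image_eqI[of _ _ "(m, if n \<ge> 0 then 1 else -1)"]) auto
qed

lemma finite_l1_sphere: "finite (l1_sphere k)"
  by (rule finite_subset[OF l1_sphere_subset]) auto

lemma card_l1_sphere_le: "card (l1_sphere k) \<le> 6 * k" if "k \<ge> 1"
proof -
  have "card (l1_sphere k) \<le> card ({-int k..int k} \<times> {-1::int, 1})"
    by (rule order.trans[OF card_mono[OF _ l1_sphere_subset] card_image_le]) auto
  also have "\<dots> = (2 * k + 1) * 2" by (simp add: card_cartesian_product)
  finally show ?thesis using that by simp
qed

lemma sum_l1_norm_inverse_cube_le:
  assumes "finite G" "(0, 0) \<notin> G"
  shows "(\<Sum>(m, n)\<in>G. 1 / real_of_int (\<bar>m\<bar> + \<bar>n\<bar>) ^ 3) \<le> 12"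
proof -
  define f :: "int \<times> int \<Rightarrow> real" where "f = (\<lambda>(m, n). 1 / real_of_int (\<bar>m\<bar> + \<bar>n\<bar>) ^ 3)"
  define K where "K = Max ((\<lambda>(m, n). nat (\<bar>m\<bar> + \<bar>n\<bar>)) ` G)"
  have "G \<subseteq> (\<Union>k\<in>{1..K}. l1_sphere k)"
  proof
    fix p assume p: "p \<in> G"
    obtain m n where [simp]: "p = (m, n)" by (cases p)
    have "nat (\<bar>m\<bar> + \<bar>n\<bar>) \<le> K" unfolding K_def using assms p by (intro Max_ge) force+
    moreover have "(m, n) \<noteq> (0, 0)" using p assms by auto
    ultimately show "p \<in> (\<Union>k\<in>{1..K}. l1_sphere k)"
      by (intro UN_I[of "nat (\<bar>m\<bar> + \<bar>n\<bar>)"]) (auto simp: l1_sphere_def)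
  qed
  hence "sum f G \<le> sum f (\<Union>k\<in>{1..K}. l1_sphere k)"
    by (intro sum_mono2) (auto simp: finite_l1_sphere f_def)
  also have "\<dots> = (\<Sum>k=1..K. sum f (l1_sphere k))"
    by (intro sum.UNION_disjoint) (auto simp: finite_l1_sphere, auto simp: l1_sphere_def)
  also have "\<dots> \<le> (\<Sum>k=1..K. 6 * (1 / (real k)^2))"
  proof (intro sum_mono)
    fix k assume k: "k \<in> {1..K}"
    have "sum f (l1_sphere k) = (\<Sum>p\<in>l1_sphere k. 1 / (real k)^3)"
      by (intro sum.cong) (auto simp: f_def l1_sphere_def simp flip: of_int_abs of_int_add)
    also have "\<dots> = real (card (l1_sphere k)) / (real k)^3" by simp
    also have "\<dots> \<le> real (6 * k) / (real k)^3"
      using card_l1_sphere_le[of k] k by (intro divide_right_mono) auto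
    finally show "sum f (l1_sphere k) \<le> 6 * (1 / (real k)^2)"
      using k by (simp add: power3_eq_cube power2_eq_square)
  qed
  also have "\<dots> = 6 * (\<Sum>k=1..K. 1 / (real k)^2)" by (simp add: sum_distrib_left)
  also have "\<dots> \<le> 12"
  proof (cases "K \<ge> 1")
    case True
    with sum_inverse_squares_le[of K] show ?thesis by (smt (verit) divide_nonneg_nonneg of_nat_0_le_iff)
  qed simp
  finally show ?thesis by (simp add: f_def)
qed

lemma holomorphic_series_on_ball:
  fixes g :: "nat \<Rightarrow> complex \<Rightarrow> complex"
  assumes holo: "\<And>n. g n holomorphic_on ball z0 r"
    and bound: "eventually (\<lambda>n. \<forall>z\<in>ball z0 r. norm (g n z) \<le> M n) sequentially"
    and M: "summable M" and r: "r > 0"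
  shows "(\<lambda>z. \<Sum>n. g n z) holomorphic_on ball z0 r"
    and "(\<lambda>n. deriv (g n) z0) sums deriv (\<lambda>z. \<Sum>n. g n z) z0"
proof -
  have ulim: "uniform_limit (ball z0 r) (\<lambda>N z. \<Sum>i<N. g i z) (\<lambda>z. \<Sum>n. g n z) sequentially"
    by (rule Weierstrass_m_test_ev[OF bound M])
  show "(\<lambda>z. \<Sum>n. g n z) holomorphic_on ball z0 r"
  proof (rule holomorphic_uniform_sequence[of _ "\<lambda>N z. \<Sum>i<N. g i z"])
    fix x assume "x \<in> ball z0 r"
    then obtain d where "d > 0" "cball x d \<subseteq> ball z0 r"
      by (meson open_ball open_contains_cball)
    thus "\<exists>d>0. cball x d \<subseteq> ball z0 r \<and>
            uniform_limit (cball x d) (\<lambda>N z. \<Sum>i<N. g i z) (\<lambda>z. \<Sum>n. g n z) sequentially"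
      using uniform_limit_on_subset[OF ulim] by blast
  qed (auto intro!: holomorphic_intros holo)
  have "(\<lambda>N. deriv (\<lambda>z. \<Sum>i<N. g i z) z0) \<longlonglongrightarrow> deriv (\<lambda>z. \<Sum>n. g n z) z0"
    by (rule deriv_complex_uniform_limit[OF ulim])
       (use r in \<open>auto intro!: always_eventually holomorphic_intros holo\<close>)
  moreover have "deriv (\<lambda>z. \<Sum>i<N. g i z) z0 = (\<Sum>i<N. deriv (g i) z0)" for N
    using holo r by (intro deriv_sum) (meson centre_in_ball holomorphic_on_imp_differentiable_at open_ball)
  ultimately show "(\<lambda>n. deriv (g n) z0) sums deriv (\<lambda>z. \<Sum>n. g n z) z0"
    unfolding sums_def by simp
qed

lemma norm_diff_ge_half:
  fixes z a :: complex
  assumes "2 * norm z \<le> norm a"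
  shows "norm a / 2 \<le> norm (z - a)"
  using norm_triangle_ineq2[of a z] assms by (simp add: norm_minus_commute)

lemma norm_inverse_square_diff_le:
  fixes z a :: complex
  assumes "2 * norm z \<le> norm a" "a \<noteq> 0"
  shows "norm (1 / (z - a)^2 - 1 / a^2) \<le> 12 * norm z / norm a ^ 3"
proof -
  have n1: "norm a / 2 \<le> norm (z - a)" by (rule norm_diff_ge_half[OF assms(1)])
  have pa: "norm a > 0" using assms by simp
  hence "z \<noteq> a" using n1 by auto
  hence eq: "1 / (z - a)^2 - 1 / a^2 = z * (2 * a - z) / ((z - a)^2 * a^2)"
    using assms(2) by (simp add: divide_simps) (simp add: power2_eq_square algebra_simps)
  have "norm (2 * a - z) \<le> 2 * norm a + norm z"
    using norm_triangle_ineq4[of "2 * a" z] by (simp add: norm_mult)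
  hence n2: "norm (2 * a - z) \<le> 3 * norm a" using assms(1) norm_ge_zero[of z] by linarith
  have "norm (1 / (z - a)^2 - 1 / a^2) = norm z * norm (2 * a - z) / (norm (z - a)^2 * norm a^2)"
    unfolding eq by (simp add: norm_mult norm_divide norm_power)
  also have "\<dots> \<le> norm z * (3 * norm a) / ((norm a / 2)^2 * norm a^2)"
    using n1 n2 pa by (intro frac_le mult_left_mono mult_right_mono power_mono mult_pos_pos) auto
  also have "\<dots> = 12 * norm z / norm a ^ 3"
    using pa by (simp add: field_simps power2_eq_square power3_eq_cube)
  finally show ?thesis .
qed

lemma norm_inverse_cube_diff_le:
  fixes z a :: complex
  assumes "2 * norm z \<le> norm a" "a \<noteq> 0"
  shows "norm (1 / (z - a)^3) \<le> 8 / norm a ^ 3"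
proof -
  have "norm a / 2 \<le> norm (z - a)" by (rule norm_diff_ge_half[OF assms(1)])
  hence "1 / norm (z - a) ^ 3 \<le> 1 / (norm a / 2) ^ 3"
    using assms(2) by (intro divide_left_mono power_mono mult_pos_pos zero_less_power) auto
  thus ?thesis by (simp add: norm_divide norm_power field_simps)
qed

lemma norm_zeta_term_le:
  fixes z a :: complex
  assumes "2 * norm z \<le> norm a" "a \<noteq> 0"
  shows "norm (z^2 / (a^2 * (z - a))) \<le> 2 * norm z ^ 2 / norm a ^ 3"
proof -
  have "norm a / 2 \<le> norm (z - a)" by (rule norm_diff_ge_half[OF assms(1)])
  hence "norm z ^ 2 / (norm a ^ 2 * norm (z - a)) \<le> norm z ^ 2 / (norm a ^ 2 * (norm a / 2))"
    using assms(2) by (intro divide_left_mono mult_left_mono mult_pos_pos) auto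
  also have "\<dots> = 2 * norm z ^ 2 / norm a ^ 3" by (simp add: field_simps power3_eq_cube power2_eq_square)
  finally show ?thesis by (simp add: norm_divide norm_power norm_mult)
qed

lemma has_field_derivative_inverse_square:
  "(z::complex) \<noteq> 0 \<Longrightarrow> ((\<lambda>z. 1 / z^2) has_field_derivative -2 / z^3) (at z)"
  by (rule derivative_eq_intros refl | simp)+ (simp add: divide_simps eval_nat_numeral)

lemma has_field_derivative_inverse:
  "(z::complex) \<noteq> 0 \<Longrightarrow> ((\<lambda>z. 1 / z) has_field_derivative -1 / z^2) (at z)"
  by (rule derivative_eq_intros refl | simp)+ (simp add: divide_simps power2_eq_square)

lemma has_field_derivative_wp_term:
  "(y::complex) \<noteq> a \<Longrightarrow>
     ((\<lambda>y. 1 / (y - a)^2 - 1 / a^2) has_field_derivative -2 * (1 / (y - a)^3)) (at y)"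
  by (rule derivative_eq_intros refl | simp)+
     (simp add: divide_simps, simp add: eval_nat_numeral algebra_simps)

lemma has_field_derivative_zeta_term:
  "(y::complex) \<noteq> a \<Longrightarrow> a \<noteq> 0 \<Longrightarrow>
     ((\<lambda>y. y^2 / (a^2 * (y - a))) has_field_derivative - (1 / (y - a)^2 - 1 / a^2)) (at y)"
  by (rule derivative_eq_intros refl | simp)+
     (simp add: divide_simps, simp add: power2_eq_square power3_eq_cube algebra_simps)

lemma weierstrass_factor_2: "weierstrass_factor 2 t = (1 - t) * exp (t + t^2 / 2)"
  by (simp add: weierstrass_factor_def numeral_2_eq_2)

lemma has_field_derivative_weierstrass_factor_2:
  "(z::complex) \<noteq> b \<Longrightarrow> b \<noteq> 0 \<Longrightarrow>
     ((\<lambda>z. weierstrass_factor 2 (z / b)) has_field_derivative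
        weierstrass_factor 2 (z / b) * (z^2 / (b^2 * (z - b)))) (at z)"
  unfolding weierstrass_factor_2
  by (rule derivative_eq_intros refl | simp)+
     (simp add: divide_simps, simp add: eval_nat_numeral algebra_simps)

lemma DERIV_zero_connected_imp_eq:
  fixes f :: "complex \<Rightarrow> complex"
  assumes "open S" "connected S" "\<And>z. z \<in> S \<Longrightarrow> (f has_field_derivative 0) (at z)"
    and "x \<in> S" "y \<in> S"
  shows "f x = f y"
proof -
  have "continuous_on S f"
    using assms(3) by (intro continuous_at_imp_continuous_on) (auto dest: DERIV_isCont)
  then obtain c where "\<And>z. z \<in> S \<Longrightarrow> f z = c"
    using DERIV_zero_connected_constant[OF assms(2,1) finite.emptyI] assms(3) by blast
  thus ?thesis using assms(4,5) by simp
qed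

lemma holomorphic_divide_square:
  assumes holo: "f holomorphic_on UNIV" and "f 0 = 0" "deriv f 0 = 0"
  obtains g where "g holomorphic_on UNIV" "\<And>z. z \<noteq> 0 \<Longrightarrow> g z = f z / z^2"
proof -
  define f1 where "f1 = (\<lambda>z. if z = 0 then deriv f 0 else (f z - f 0) / (z - 0))"
  have holo1: "f1 holomorphic_on UNIV" unfolding f1_def by (rule pole_lemma[OF holo]) auto
  define f2 where "f2 = (\<lambda>z. if z = 0 then deriv f1 0 else (f1 z - f1 0) / (z - 0))"
  have "f2 holomorphic_on UNIV" unfolding f2_def by (rule pole_lemma[OF holo1]) auto
  moreover have "f2 z = f z / z^2" if "z \<noteq> 0" for z
    using that assms(2,3) by (simp add: f2_def f1_def power2_eq_square)
  ultimately show ?thesis using that by blast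
qed

lemma periodic_int_multiple:
  assumes "\<And>z. f (z + w) = f z"
  shows "f (z + of_int m * w) = f z"
proof (induction m arbitrary: z rule: int_induct[where k = 0])
  case (step1 i)
  thus ?case using assms[of "z + of_int i * w"] by (simp add: algebra_simps)
next
  case (step2 i)
  thus ?case using assms[of "z + of_int (i - 1) * w"] by (simp add: algebra_simps)
qed simp

section \<open>Period lattices\<close>

locale period_lattice =
  fixes w1 w2 :: complex
  assumes nondeg: "lattice_nondeg w1 w2"
begin

abbreviation \<Lambda> where "\<Lambda> \<equiv> lattice w1 w2"

definition lattice_point :: "int \<times> int \<Rightarrow> complex" where
  "lattice_point = (\<lambda>(m, n). of_int m * w1 + of_int n * w2)"

lemma lattice_eq_range: "\<Lambda> = range lattice_point"
  by (auto simp: lattice_def lattice_point_def)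

lemma lattice_iff: "z \<in> \<Lambda> \<longleftrightarrow> (\<exists>m n::int. z = of_int m * w1 + of_int n * w2)"
  by (auto simp: lattice_def)

lemma zero_in_lattice [simp]: "0 \<in> \<Lambda>"
  and period1_in_lattice [simp]: "w1 \<in> \<Lambda>"
  and period2_in_lattice [simp]: "w2 \<in> \<Lambda>"
  unfolding lattice_iff by (rule exI[of _ 0] exI[of _ 1] exI[of _ 0] exI[of _ 1]; simp)+

lemma lattice_add: "a \<in> \<Lambda> \<Longrightarrow> b \<in> \<Lambda> \<Longrightarrow> a + b \<in> \<Lambda>"
proof -
  assume "a \<in> \<Lambda>" "b \<in> \<Lambda>"
  then obtain m n m' n' :: int
    where "a = of_int m * w1 + of_int n * w2" "b = of_int m' * w1 + of_int n' * w2"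
    by (auto simp: lattice_iff)
  hence "a + b = of_int (m + m') * w1 + of_int (n + n') * w2" by (simp add: algebra_simps)
  thus ?thesis unfolding lattice_iff by blast
qed

lemma lattice_uminus_iff [simp]: "-a \<in> \<Lambda> \<longleftrightarrow> a \<in> \<Lambda>"
proof -
  have "-a \<in> \<Lambda>" if "a \<in> \<Lambda>" for a
  proof -
    from that obtain m n :: int where "a = of_int m * w1 + of_int n * w2" by (auto simp: lattice_iff)
    hence "-a = of_int (-m) * w1 + of_int (-n) * w2" by simp
    thus ?thesis unfolding lattice_iff by blast
  qed
  from this[of a] this[of "-a"] show ?thesis by auto
qed

lemma lattice_diff: "a \<in> \<Lambda> \<Longrightarrow> b \<in> \<Lambda> \<Longrightarrow> a - b \<in> \<Lambda>"
  using lattice_add[of a "-b"] by simp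

lemma lattice_add_iff: "b \<in> \<Lambda> \<Longrightarrow> a + b \<in> \<Lambda> \<longleftrightarrow> a \<in> \<Lambda>"
  using lattice_add[of "a + b" "-b"] lattice_add[of a b] by auto

lemma real_coords_eq_0:
  assumes "of_real s * w1 + of_real t * w2 = 0"
  shows "s = 0" "t = 0"
proof -
  define \<tau> where "\<tau> = w2 / w1"
  have w1: "w1 \<noteq> 0" and q: "Im \<tau> \<noteq> 0" using nondeg by (auto simp: lattice_nondeg_def \<tau>_def)
  have "of_real s + of_real t * \<tau> = 0" using assms w1 by (simp add: \<tau>_def field_simps)
  from arg_cong[OF this, of Im] arg_cong[OF this, of Re] q show "t = 0" "s = 0" by auto
qed

lemma real_coords_exist: "\<exists>s t::real. z = of_real s * w1 + of_real t * w2"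
proof -
  define \<tau> where "\<tau> = w2 / w1"
  have w1: "w1 \<noteq> 0" and q: "Im \<tau> \<noteq> 0" using nondeg by (auto simp: lattice_nondeg_def \<tau>_def)
  define t where "t = Im (z / w1) / Im \<tau>"
  define s where "s = Re (z / w1) - t * Re \<tau>"
  have "of_real s + of_real t * \<tau> = z / w1"
    using q by (intro complex_eqI) (auto simp: s_def t_def)
  hence "z = of_real s * w1 + of_real t * w2" using w1 by (simp add: \<tau>_def field_simps)
  thus ?thesis by blast
qed

lemma inj_lattice_point: "inj lattice_point"
proof (rule injI, clarsimp simp: lattice_point_def)
  fix m n m' n' :: int
  assume "of_int m * w1 + of_int n * w2 = of_int m' * w1 + of_int n' * w2"
  hence "of_real (of_int m - of_int m') * w1 + of_real (of_int n - of_int n') * w2 = 0"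
    by (simp add: algebra_simps)
  from real_coords_eq_0[OF this] show "m = m' \<and> n = n'" by simp
qed

lemma half_periods_notin_lattice: "w1 / 2 \<notin> \<Lambda>" "w2 / 2 \<notin> \<Lambda>"
proof -
  have *: False if "of_real s * w1 + of_real t * w2 \<in> \<Lambda>" "s = 1/2 \<or> t = 1/2" for s t
  proof -
    from that obtain m n :: int where "of_real s * w1 + of_real t * w2 = of_int m * w1 + of_int n * w2"
      by (auto simp: lattice_iff)
    hence "of_real (s - of_int m) * w1 + of_real (t - of_int n) * w2 = 0" by (simp add: algebra_simps)
    from real_coords_eq_0[OF this] have "s = of_int m" "t = of_int n" by auto
    hence "2 * m = 1 \<or> 2 * n = 1" using that(2) by linarith
    thus False by presburger
  qed
  show "w1 / 2 \<notin> \<Lambda>" using *[of "1/2" 0] by auto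
  show "w2 / 2 \<notin> \<Lambda>" using *[of 0 "1/2"] by auto
qed

lemma lattice_point_norm_lower_bound:
  obtains c where "c > 0" "\<And>m n::int. c * real_of_int (\<bar>m\<bar> + \<bar>n\<bar>) \<le> norm (lattice_point (m, n))"
proof -
  obtain c where "c > 0" "\<And>s t::real. c * (\<bar>s\<bar> + \<bar>t\<bar>) \<le> norm (of_real s * w1 + of_real t * w2)"
    using lattice_norm_lower_bound[OF nondeg] by blast
  moreover have "c * real_of_int (\<bar>m\<bar> + \<bar>n\<bar>) \<le> norm (lattice_point (m, n))" for m n
    using calculation(2)[of "of_int m" "of_int n"] by (simp add: lattice_point_def)
  ultimately show ?thesis using that by blast
qed

lemma nonzero_lattice_norm_ge:
  obtains c where "c > 0" "\<And>\<omega>. \<omega> \<in> \<Lambda> \<Longrightarrow> \<omega> \<noteq> 0 \<Longrightarrow> c \<le> norm \<omega>"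
proof -
  obtain c where c: "c > 0" "\<And>m n. c * real_of_int (\<bar>m\<bar> + \<bar>n\<bar>) \<le> norm (lattice_point (m, n))"
    using lattice_point_norm_lower_bound by metis
  have "c \<le> norm \<omega>" if "\<omega> \<in> \<Lambda>" "\<omega> \<noteq> 0" for \<omega>
  proof -
    from that obtain m n where \<omega>: "\<omega> = lattice_point (m, n)" by (auto simp: lattice_eq_range)
    with that have "\<bar>m\<bar> + \<bar>n\<bar> \<ge> 1" by (cases "m = 0"; cases "n = 0") (auto simp: lattice_point_def)
    hence "c * 1 \<le> c * real_of_int (\<bar>m\<bar> + \<bar>n\<bar>)" using c(1) by (intro mult_left_mono) linarith+
    thus ?thesis using c(2)[of m n] \<omega> by simp
  qed
  with c(1) that show ?thesis by blast
qed

lemma not_islimpt_lattice: "\<not> z islimpt \<Lambda>"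
proof -
  obtain c where c: "c > 0" "\<And>\<omega>. \<omega> \<in> \<Lambda> \<Longrightarrow> \<omega> \<noteq> 0 \<Longrightarrow> c \<le> norm \<omega>"
    using nonzero_lattice_norm_ge by metis
  show ?thesis
  proof (rule discrete_imp_not_islimpt[OF c(1)])
    fix x y assume "x \<in> \<Lambda>" "y \<in> \<Lambda>" "dist y x < c"
    thus "y = x" using c(2)[of "y - x"] lattice_diff[of y x] by (force simp: dist_norm)
  qed
qed

lemma closed_lattice: "closed \<Lambda>"
  using not_islimpt_lattice closed_limpt by blast

lemma open_lattice_complement: "open (-\<Lambda>)"
  using closed_lattice by (simp add: closed_def)

lemma countable_lattice: "countable \<Lambda>"
  by (simp add: lattice_eq_range)

lemma connected_lattice_complement: "connected (-\<Lambda>)"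
  using path_connected_complement_countable[OF _ countable_lattice]
  by (simp add: path_connected_imp_connected)

lemma eventually_notin_lattice: "eventually (\<lambda>y. y + c \<notin> \<Lambda>) (at 0)"
  using not_islimpt_lattice[of c] unfolding islimpt_iff_eventually at_to_0[of c]
  by (simp add: eventually_filtermap)

lemma finite_lattice_inter_cball: "finite (\<Lambda> \<inter> cball 0 R)"
proof -
  obtain c where c: "c > 0" "\<And>m n. c * real_of_int (\<bar>m\<bar> + \<bar>n\<bar>) \<le> norm (lattice_point (m, n))"
    using lattice_point_norm_lower_bound by metis
  define N where "N = \<lceil>R / c\<rceil>"
  have "\<Lambda> \<inter> cball 0 R \<subseteq> lattice_point ` ({-N..N} \<times> {-N..N})"
  proof
    fix z assume z: "z \<in> \<Lambda> \<inter> cball 0 R"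
    then obtain m n where e: "z = lattice_point (m, n)" by (auto simp: lattice_eq_range)
    have "c * real_of_int (\<bar>m\<bar> + \<bar>n\<bar>) \<le> R" using c(2)[of m n] e z by auto
    hence "real_of_int (\<bar>m\<bar> + \<bar>n\<bar>) \<le> R / c" using c(1) by (simp add: field_simps)
    hence "\<bar>m\<bar> + \<bar>n\<bar> \<le> N" unfolding N_def by linarith
    thus "z \<in> lattice_point ` ({-N..N} \<times> {-N..N})" using e by force
  qed
  thus ?thesis by (rule finite_subset) auto
qed

lemma summable_on_lattice_inverse_cube: "(\<lambda>\<omega>. 1 / norm \<omega> ^ 3) summable_on (\<Lambda> - {0})"
proof (rule nonneg_bdd_above_summable_on)
  obtain c where c: "c > 0" "\<And>m n. c * real_of_int (\<bar>m\<bar> + \<bar>n\<bar>) \<le> norm (lattice_point (m, n))"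
    using lattice_point_norm_lower_bound by metis
  show "bdd_above (sum (\<lambda>\<omega>. 1 / norm \<omega> ^ 3) ` {F. F \<subseteq> \<Lambda> - {0} \<and> finite F})"
  proof (rule bdd_aboveI[of _ "12 / c ^ 3"], clarsimp)
    fix F assume F: "F \<subseteq> \<Lambda> - {0}" "finite F"
    define G where "G = lattice_point -` F"
    have G: "finite G" "(0, 0) \<notin> G"
      using F inj_lattice_point by (auto simp: G_def lattice_point_def intro!: finite_vimageI)
    have "F = lattice_point ` G" using F by (auto simp: G_def lattice_eq_range)
    hence "sum (\<lambda>\<omega>. 1 / norm \<omega> ^ 3) F = (\<Sum>p\<in>G. 1 / norm (lattice_point p) ^ 3)"
      using inj_lattice_point by (simp add: sum.reindex inj_on_subset)
    also have "\<dots> \<le> (\<Sum>(m, n)\<in>G. 1 / real_of_int (\<bar>m\<bar> + \<bar>n\<bar>) ^ 3 / c ^ 3)"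
    proof (intro sum_mono, clarify)
      fix m n assume "(m, n) \<in> G"
      with G(2) have "\<bar>m\<bar> + \<bar>n\<bar> > 0" by (cases "m = 0") auto
      hence pos: "c * real_of_int (\<bar>m\<bar> + \<bar>n\<bar>) > 0" using c(1) by simp
      moreover from pos have "0 < norm (lattice_point (m, n))" using c(2)[of m n] by linarith
      ultimately have "1 / norm (lattice_point (m, n)) ^ 3 \<le> 1 / (c * real_of_int (\<bar>m\<bar> + \<bar>n\<bar>)) ^ 3"
        using c(2)[of m n] by (intro divide_left_mono power_mono) (auto simp: zero_less_mult_iff)
      thus "1 / norm (lattice_point (m, n)) ^ 3 \<le> 1 / real_of_int (\<bar>m\<bar> + \<bar>n\<bar>) ^ 3 / c ^ 3"
        by (simp add: power_mult_distrib mult.commute)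
    qed
    also have "\<dots> = (\<Sum>(m, n)\<in>G. 1 / real_of_int (\<bar>m\<bar> + \<bar>n\<bar>) ^ 3) / c ^ 3"
      by (simp add: sum_divide_distrib case_prod_beta)
    also have "\<dots> \<le> 12 / c ^ 3"
      using sum_l1_norm_inverse_cube_le[OF G] c(1) by (intro divide_right_mono) auto
    finally show "sum (\<lambda>\<omega>. 1 / norm \<omega> ^ 3) F \<le> 12 / c ^ 3" .
  qed
qed auto

lemma infinite_nonzero_lattice: "infinite (\<Lambda> - {0})"
proof -
  have w1: "w1 \<noteq> 0" using nondeg by (simp add: lattice_nondeg_def)
  have "lattice_point (int (Suc n), 0) \<noteq> 0" for n
    using w1 by (simp add: lattice_point_def del: of_nat_Suc)
  hence "range (\<lambda>n::nat. lattice_point (int (Suc n), 0)) \<subseteq> \<Lambda> - {0}"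
    by (auto simp: lattice_eq_range)
  moreover have "inj (\<lambda>n::nat. lattice_point (int (Suc n), 0))"
    using inj_lattice_point by (auto intro!: injI dest: injD)
  ultimately show ?thesis using range_inj_infinite infinite_super by blast
qed

lemma lattice_periodic_off_lattice:
  fixes f :: "complex \<Rightarrow> 'a::zero"
  assumes "\<And>z. z \<notin> \<Lambda> \<Longrightarrow> f (z + w1) = f z" "\<And>z. z \<notin> \<Lambda> \<Longrightarrow> f (z + w2) = f z"
    and "z \<notin> \<Lambda>" "w \<in> \<Lambda>"
  shows "f (z + w) = f z"
proof -
  define g where "g z = (if z \<in> \<Lambda> then 0 else f z)" for z
  have g1: "g (z + w1) = g z" and g2: "g (z + w2) = g z" for z
    using assms(1,2)[of z] lattice_add_iff[of w1 z] lattice_add_iff[of w2 z] by (auto simp: g_def)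
  obtain m n :: int where w: "w = of_int m * w1 + of_int n * w2" using assms(4) by (auto simp: lattice_iff)
  have "g (z + w) = g ((z + of_int m * w1) + of_int n * w2)" by (simp add: w add.assoc)
  also have "\<dots> = g z" using periodic_int_multiple[of g, OF g1] periodic_int_multiple[of g, OF g2] by simp
  finally show ?thesis using assms(3,4) lattice_add_iff[of w z] by (auto simp: g_def)
qed

section \<open>The Weierstrass functions\<close>

abbreviation \<omega> where "\<omega> \<equiv> lattice_enum w1 w2"

lemma bij_betw_lattice_enum: "bij_betw \<omega> UNIV (\<Lambda> - {0})"
proof -
  have "\<exists>f. bij_betw f (UNIV :: nat set) (\<Lambda> - {0})"
    using bij_betw_from_nat_into[of "\<Lambda> - {0}"] countable_lattice infinite_nonzero_lattice by auto
  from someI_ex[OF this] show ?thesis by (simp add: lattice_enum_def)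
qed

lemma lattice_enum_in_lattice: "\<omega> n \<in> \<Lambda>" and lattice_enum_nonzero: "\<omega> n \<noteq> 0"
  using bij_betw_lattice_enum by (auto simp: bij_betw_def)

lemma range_lattice_enum: "range \<omega> = \<Lambda> - {0}"
  using bij_betw_lattice_enum by (auto simp: bij_betw_def)

lemma summable_lattice_enum_inverse_cube: "summable (\<lambda>n. K / norm (\<omega> n) ^ 3)"
proof -
  have "(\<lambda>n. 1 / norm (\<omega> n) ^ 3) summable_on UNIV"
    using summable_on_reindex_bij_betw[OF bij_betw_lattice_enum, of "\<lambda>\<omega>. 1 / norm \<omega> ^ 3"]
      summable_on_lattice_inverse_cube
    by simp
  hence "summable (\<lambda>n. 1 / norm (\<omega> n) ^ 3)" by (subst (asm) summable_on_UNIV_nonneg_real_iff) auto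
  from summable_mult[OF this, of K] show ?thesis by simp
qed

lemma filterlim_lattice_enum: "filterlim \<omega> at_infinity at_top"
  unfolding filterlim_at_infinity_conv_norm_at_top filterlim_at_top
proof
  fix R :: real
  have "{n. \<not> R \<le> norm (\<omega> n)} \<subseteq> \<omega> -` (\<Lambda> \<inter> cball 0 R)" using lattice_enum_in_lattice by auto
  moreover have "inj \<omega>" using bij_betw_lattice_enum by (simp add: bij_betw_def)
  hence "finite (\<omega> -` (\<Lambda> \<inter> cball 0 R))" using finite_lattice_inter_cball by (intro finite_vimageI)
  ultimately have "finite {n. \<not> R \<le> norm (\<omega> n)}" by (rule finite_subset)
  thus "eventually (\<lambda>n. R \<le> norm (\<omega> n)) at_top"
    by (simp add: cofinite_eq_sequentially[symmetric] eventually_cofinite)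
qed

sublocale W: weierstrass_product \<omega> "\<lambda>_. 2"
proof
  show "summable (\<lambda>n. (r / norm (\<omega> n)) ^ Suc 2)" for r
    using summable_lattice_enum_inverse_cube[of "r ^ 3"] by (simp add: power_divide)
qed (use lattice_enum_nonzero filterlim_lattice_enum in auto)

lemma infsum_nonzero_lattice_eq_suminf:
  fixes f :: "complex \<Rightarrow> complex"
  assumes "summable (\<lambda>n. norm (f (\<omega> n)))"
  shows "f summable_on (\<Lambda> - {0})" "infsum f (\<Lambda> - {0}) = (\<Sum>n. f (\<omega> n))"
proof -
  have "((\<lambda>n. f (\<omega> n)) has_sum (\<Sum>n. f (\<omega> n))) UNIV"
    using norm_summable_imp_has_sum[OF assms summable_sums[OF summable_norm_cancel[OF assms]]] .
  thus "f summable_on (\<Lambda> - {0})" "infsum f (\<Lambda> - {0}) = (\<Sum>n. f (\<omega> n))"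
    using has_sum_reindex_bij_betw[OF bij_betw_lattice_enum, of f]
    by (auto simp: summable_on_def infsumI)
qed

lemma open_nonzero_lattice_complement: "open (-(\<Lambda> - {0}))"
proof -
  have "closed (\<Lambda> - {0})"
    using not_islimpt_lattice closed_limpt islimpt_subset[of _ "\<Lambda> - {0}" \<Lambda>] by blast
  thus ?thesis by (simp add: closed_def)
qed

lemma connected_nonzero_lattice_complement: "connected (-(\<Lambda> - {0}))"
  using path_connected_complement_countable[of "\<Lambda> - {0}"] countable_lattice
  by (simp add: path_connected_imp_connected)

lemma summable_lattice_series:
  assumes "\<And>n z R. norm z \<le> R \<Longrightarrow> 2 * R \<le> norm (\<omega> n) \<Longrightarrow> norm (g n z) \<le> K R / norm (\<omega> n) ^ 3"
  shows "summable (\<lambda>n. norm (g n z))"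
proof (rule summable_comparison_test_ev[OF _ summable_lattice_enum_inverse_cube])
  have "eventually (\<lambda>n. 2 * norm z \<le> norm (\<omega> n)) sequentially"
    using filterlim_lattice_enum unfolding filterlim_at_infinity_conv_norm_at_top filterlim_at_top
    by blast
  thus "eventually (\<lambda>n. norm (norm (g n z)) \<le> K (norm z) / norm (\<omega> n) ^ 3) sequentially"
    by eventually_elim (use assms[of z "norm z"] in auto)
qed

lemma has_field_derivative_lattice_series:
  assumes deriv: "\<And>n z. z \<in> -(\<Lambda> - {0}) \<Longrightarrow> (g n has_field_derivative g' n z) (at z)"
    and bound: "\<And>n z R. norm z \<le> R \<Longrightarrow> 2 * R \<le> norm (\<omega> n) \<Longrightarrow> norm (g n z) \<le> K R / norm (\<omega> n) ^ 3"
    and z: "z \<in> -(\<Lambda> - {0})"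
  shows "((\<lambda>z. \<Sum>n. g n z) has_field_derivative (\<Sum>n. g' n z)) (at z)"
proof -
  obtain r where r: "r > 0" "ball z r \<subseteq> -(\<Lambda> - {0})"
    using open_nonzero_lattice_complement z openE by blast
  have holo: "g n holomorphic_on ball z r" for n
    using r(2) by (subst holomorphic_on_open[OF open_ball]) (blast intro: deriv)
  have "eventually (\<lambda>n. 2 * (norm z + r) \<le> norm (\<omega> n)) sequentially"
    using filterlim_lattice_enum unfolding filterlim_at_infinity_conv_norm_at_top filterlim_at_top
    by blast
  hence "eventually (\<lambda>n. \<forall>y\<in>ball z r. norm (g n y) \<le> K (norm z + r) / norm (\<omega> n) ^ 3) sequentially"
  proof eventually_elim
    case (elim n)
    have "norm y \<le> norm z + r" if "y \<in> ball z r" for y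
      using that norm_triangle_ineq2[of y z] by (auto simp: dist_norm norm_minus_commute)
    with elim show ?case using bound by blast
  qed
  from holomorphic_series_on_ball[OF holo this summable_lattice_enum_inverse_cube r(1)]
  have holo_sum: "(\<lambda>z. \<Sum>n. g n z) holomorphic_on ball z r"
    and "(\<lambda>n. deriv (g n) z) sums deriv (\<lambda>z. \<Sum>n. g n z) z" by blast+
  moreover have "deriv (g n) z = g' n z" for n using deriv[OF z] by (rule DERIV_imp_deriv)
  ultimately have "(\<Sum>n. g' n z) = deriv (\<lambda>z. \<Sum>n. g n z) z" by (simp add: sums_iff)
  thus ?thesis using holo_sum r(1) by (auto intro: holomorphic_derivI)
qed

definition wp_tail where "wp_tail z = (\<Sum>n. 1 / (z - \<omega> n)^2 - 1 / (\<omega> n)^2)"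
definition wp_deriv_tail where "wp_deriv_tail z = (\<Sum>n. 1 / (z - \<omega> n)^3)"
definition zeta_tail where "zeta_tail z = (\<Sum>n. z^2 / ((\<omega> n)^2 * (z - \<omega> n)))"

lemma wp_tail_bound:
  "norm z \<le> R \<Longrightarrow> 2 * R \<le> norm (\<omega> n) \<Longrightarrow>
     norm (1 / (z - \<omega> n)^2 - 1 / (\<omega> n)^2) \<le> 12 * R / norm (\<omega> n) ^ 3"
proof -
  assume R: "norm z \<le> R" "2 * R \<le> norm (\<omega> n)"
  hence "norm (1 / (z - \<omega> n)^2 - 1 / (\<omega> n)^2) \<le> 12 * norm z / norm (\<omega> n) ^ 3"
    using lattice_enum_nonzero by (intro norm_inverse_square_diff_le) auto
  also have "\<dots> \<le> 12 * R / norm (\<omega> n) ^ 3" using R(1) by (intro divide_right_mono) auto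
  finally show ?thesis .
qed

lemma wp_deriv_tail_bound:
  "norm z \<le> R \<Longrightarrow> 2 * R \<le> norm (\<omega> n) \<Longrightarrow> norm (1 / (z - \<omega> n)^3) \<le> 8 / norm (\<omega> n) ^ 3"
  using norm_inverse_cube_diff_le[of z "\<omega> n"] lattice_enum_nonzero[of n] by simp

lemma zeta_tail_bound:
  "norm z \<le> R \<Longrightarrow> 2 * R \<le> norm (\<omega> n) \<Longrightarrow>
     norm (z^2 / ((\<omega> n)^2 * (z - \<omega> n))) \<le> 2 * R^2 / norm (\<omega> n) ^ 3"
proof -
  assume R: "norm z \<le> R" "2 * R \<le> norm (\<omega> n)"
  hence "norm (z^2 / ((\<omega> n)^2 * (z - \<omega> n))) \<le> 2 * norm z ^ 2 / norm (\<omega> n) ^ 3"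
    using lattice_enum_nonzero by (intro norm_zeta_term_le) auto
  also have "\<dots> \<le> 2 * R^2 / norm (\<omega> n) ^ 3"
    using R(1) by (intro divide_right_mono mult_left_mono power_mono) auto
  finally show ?thesis .
qed

lemma summable_wp_tail: "summable (\<lambda>n. norm (1 / (z - \<omega> n)^2 - 1 / (\<omega> n)^2))"
  by (rule summable_lattice_series[where K = "\<lambda>R. 12 * R", OF wp_tail_bound])

lemma summable_wp_deriv_tail: "summable (\<lambda>n. norm (1 / (z - \<omega> n)^3))"
  by (rule summable_lattice_series[where K = "\<lambda>_. 8", OF wp_deriv_tail_bound])

lemma wp_tail_has_field_derivative:
  assumes "z \<in> -(\<Lambda> - {0})"
  shows "(wp_tail has_field_derivative -2 * wp_deriv_tail z) (at z)"
proof -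
  have "((\<lambda>z. \<Sum>n. 1 / (z - \<omega> n)^2 - 1 / (\<omega> n)^2) has_field_derivative
          (\<Sum>n. -2 * (1 / (z - \<omega> n)^3))) (at z)"
  proof (rule has_field_derivative_lattice_series[OF _ wp_tail_bound assms])
    fix n and y :: complex assume "y \<in> -(\<Lambda> - {0})"
    thus "((\<lambda>y. 1 / (y - \<omega> n)^2 - 1 / (\<omega> n)^2) has_field_derivative -2 * (1 / (y - \<omega> n)^3)) (at y)"
      using lattice_enum_in_lattice[of n] lattice_enum_nonzero[of n]
      by (intro has_field_derivative_wp_term) auto
  qed
  moreover have "(\<Sum>n. -2 * (1 / (z - \<omega> n)^3)) = -2 * wp_deriv_tail z"
    unfolding wp_deriv_tail_def
    using summable_norm_cancel[OF summable_wp_deriv_tail] by (rule suminf_mult)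
  ultimately show ?thesis by (simp add: wp_tail_def[abs_def])
qed

lemma zeta_tail_has_field_derivative:
  assumes "z \<in> -(\<Lambda> - {0})"
  shows "(zeta_tail has_field_derivative - wp_tail z) (at z)"
proof -
  have "((\<lambda>z. \<Sum>n. z^2 / ((\<omega> n)^2 * (z - \<omega> n))) has_field_derivative
          (\<Sum>n. - (1 / (z - \<omega> n)^2 - 1 / (\<omega> n)^2))) (at z)"
  proof (rule has_field_derivative_lattice_series[OF _ zeta_tail_bound assms])
    fix n and y :: complex assume "y \<in> -(\<Lambda> - {0})"
    thus "((\<lambda>y. y^2 / ((\<omega> n)^2 * (y - \<omega> n))) has_field_derivative
            - (1 / (y - \<omega> n)^2 - 1 / (\<omega> n)^2)) (at y)"
      using lattice_enum_in_lattice[of n] lattice_enum_nonzero[of n]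
      by (intro has_field_derivative_zeta_term) auto
  qed
  moreover have "(\<Sum>n. - (1 / (z - \<omega> n)^2 - 1 / (\<omega> n)^2)) = - wp_tail z"
    unfolding wp_tail_def
    using summable_norm_cancel[OF summable_wp_tail] by (rule suminf_minus)
  ultimately show ?thesis by (simp add: zeta_tail_def[abs_def])
qed

abbreviation wp_lattice :: "complex \<Rightarrow> complex" ("\<wp>") where "\<wp> \<equiv> wp w1 w2"
abbreviation wp'_lattice :: "complex \<Rightarrow> complex" ("\<wp>''") where "\<wp>' \<equiv> wp' w1 w2"

lemma wp_eq_tail: "\<wp> z = 1 / z^2 + wp_tail z"
  unfolding wp_def wp_tail_def
  using infsum_nonzero_lattice_eq_suminf(2)[OF summable_wp_tail] by simp

lemma wp_has_field_derivative_tail: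
  assumes "z \<notin> \<Lambda>"
  shows "(\<wp> has_field_derivative -2 / z^3 - 2 * wp_deriv_tail z) (at z)"
proof -
  have "z \<noteq> 0" using assms by auto
  from DERIV_add[OF has_field_derivative_inverse_square[OF this] wp_tail_has_field_derivative[of z]]
  have "((\<lambda>z. 1 / z^2 + wp_tail z) has_field_derivative -2 / z^3 - 2 * wp_deriv_tail z) (at z)"
    using assms by simp
  thus ?thesis by (simp add: wp_eq_tail[abs_def])
qed

lemma wp'_eq_tail: "z \<notin> \<Lambda> \<Longrightarrow> \<wp>' z = -2 / z^3 - 2 * wp_deriv_tail z"
  unfolding wp'_def by (rule DERIV_imp_deriv[OF wp_has_field_derivative_tail])

lemma wp_has_field_derivative: "z \<notin> \<Lambda> \<Longrightarrow> (\<wp> has_field_derivative \<wp>' z) (at z)"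
  using wp_has_field_derivative_tail wp'_eq_tail by simp

lemma holomorphic_wp: "\<wp> holomorphic_on -\<Lambda>"
  using wp_has_field_derivative by (subst holomorphic_on_open[OF open_lattice_complement]) auto

lemma wp'_eq_infsum:
  assumes "z \<notin> \<Lambda>"
  shows "\<wp>' z = -2 * infsum (\<lambda>w. 1 / (z - w)^3) \<Lambda>"
proof -
  have sum: "(\<lambda>w. 1 / (z - w)^3) summable_on (\<Lambda> - {0})"
    "infsum (\<lambda>w. 1 / (z - w)^3) (\<Lambda> - {0}) = wp_deriv_tail z"
    using infsum_nonzero_lattice_eq_suminf[OF summable_wp_deriv_tail]
    by (simp_all add: wp_deriv_tail_def)
  have "infsum (\<lambda>w. 1 / (z - w)^3) \<Lambda> = infsum (\<lambda>w. 1 / (z - w)^3) (insert 0 (\<Lambda> - {0}))"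
    by (simp add: insert_absorb)
  also have "\<dots> = 1 / z^3 + wp_deriv_tail z"
    by (subst infsum_insert[OF sum(1)]) (simp_all add: sum(2))
  finally have "infsum (\<lambda>w. 1 / (z - w)^3) \<Lambda> = 1 / z^3 + wp_deriv_tail z" .
  thus ?thesis using assms by (simp add: wp'_eq_tail algebra_simps)
qed

lemma wp'_periodic:
  assumes "z \<notin> \<Lambda>" "w \<in> \<Lambda>"
  shows "\<wp>' (z + w) = \<wp>' z"
proof -
  have "bij_betw (\<lambda>v. v + w) \<Lambda> \<Lambda>"
    by (rule bij_betwI[of _ _ _ "\<lambda>v. v - w"]) (use assms(2) lattice_add lattice_diff in auto)
  from infsum_reindex_bij_betw[OF this, of "\<lambda>v. 1 / (z + w - v)^3"]
  have "infsum (\<lambda>v. 1 / (z + w - v)^3) \<Lambda> = infsum (\<lambda>v. 1 / (z - v)^3) \<Lambda>" by simp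
  thus ?thesis using assms lattice_add_iff[of w z] by (simp add: wp'_eq_infsum)
qed

lemma wp_even: "\<wp> (-z) = \<wp> z"
proof -
  have "bij_betw uminus (\<Lambda> - {0}) (\<Lambda> - {0})" by (rule bij_betwI[of _ _ _ uminus]) auto
  from infsum_reindex_bij_betw[OF this, of "\<lambda>w. 1 / (-z - w)^2 - 1 / w^2"]
  have "infsum (\<lambda>w. 1 / (-z - w)^2 - 1 / w^2) (\<Lambda> - {0}) = infsum (\<lambda>w. 1 / (z - w)^2 - 1 / w^2) (\<Lambda> - {0})"
    by (simp add: power2_eq_square algebra_simps)
  thus ?thesis by (simp add: wp_def)
qed

text \<open>The difference \<open>\<wp> (z + w) - \<wp> z\<close> has derivative zero, hence is constant, and it vanishes at
  \<open>z = -w/2\<close> because \<open>\<wp>\<close> is even; this needs the half period \<open>w/2\<close> to lie off the lattice.\<close>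
lemma wp_periodic_half_period:
  assumes w: "w \<in> \<Lambda>" "w / 2 \<notin> \<Lambda>" and z: "z \<notin> \<Lambda>"
  shows "\<wp> (z + w) = \<wp> z"
proof -
  have "((\<lambda>z. \<wp> (z + w) - \<wp> z) has_field_derivative 0) (at x)" if "x \<in> -\<Lambda>" for x
  proof -
    have x: "x \<notin> \<Lambda>" "x + w \<notin> \<Lambda>" using that lattice_add_iff[OF w(1)] by auto
    have "((\<lambda>z. \<wp> (z + w)) has_field_derivative \<wp>' (x + w) * 1) (at x)"
      by (rule DERIV_chain2[where g = "\<lambda>z. z + w", OF wp_has_field_derivative[OF x(2)]])
         (auto intro!: derivative_eq_intros)
    from DERIV_diff[OF this wp_has_field_derivative[OF x(1)]] show ?thesis
      using wp'_periodic[OF x(1) w(1)] by simp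
  qed
  moreover have "-w/2 \<in> -\<Lambda>" using w(2) by simp
  ultimately have "\<wp> (z + w) - \<wp> z = \<wp> (-w/2 + w) - \<wp> (-w/2)"
    using DERIV_zero_connected_imp_eq[OF open_lattice_complement connected_lattice_complement] z
    by blast
  also have "\<dots> = 0" using wp_even[of "w/2"] by simp
  finally show ?thesis by simp
qed

lemma wp_periodic: "z \<notin> \<Lambda> \<Longrightarrow> w \<in> \<Lambda> \<Longrightarrow> \<wp> (z + w) = \<wp> z"
  using lattice_periodic_off_lattice[of \<wp>] wp_periodic_half_period half_periods_notin_lattice
  by simp

definition zeta :: "complex \<Rightarrow> complex" ("\<zeta>") where "\<zeta> z = 1 / z + zeta_tail z"

lemma zeta_has_field_derivative: "z \<notin> \<Lambda> \<Longrightarrow> (\<zeta> has_field_derivative - \<wp> z) (at z)"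
proof -
  assume z: "z \<notin> \<Lambda>"
  hence "z \<noteq> 0" by auto
  from DERIV_add[OF has_field_derivative_inverse[OF this] zeta_tail_has_field_derivative[of z]] z
  have "((\<lambda>z. 1 / z + zeta_tail z) has_field_derivative -1 / z^2 - wp_tail z) (at z)" by simp
  thus ?thesis by (simp add: zeta_def[abs_def] wp_eq_tail)
qed

lemma zeta_tail_odd:
  assumes "z \<in> -(\<Lambda> - {0})"
  shows "zeta_tail (-z) = - zeta_tail z"
proof -
  have "((\<lambda>z. zeta_tail z + zeta_tail (-z)) has_field_derivative 0) (at x)"
    if x: "x \<in> -(\<Lambda> - {0})" for x
  proof -
    have "-x \<in> -(\<Lambda> - {0})" using x by auto
    have "((\<lambda>z. zeta_tail (-z)) has_field_derivative - wp_tail (-x) * -1) (at x)"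
      by (rule DERIV_chain2[where g = uminus, OF zeta_tail_has_field_derivative[OF \<open>-x \<in> _\<close>]])
         (auto intro!: derivative_eq_intros)
    from DERIV_add[OF zeta_tail_has_field_derivative[OF x] this] show ?thesis
      using wp_even[of x] by (simp add: wp_eq_tail)
  qed
  from DERIV_zero_connected_imp_eq[OF open_nonzero_lattice_complement
      connected_nonzero_lattice_complement this assms, of 0]
  show ?thesis by (simp add: zeta_tail_def add_eq_0_iff)
qed

abbreviation wsigma_lattice :: "complex \<Rightarrow> complex" ("\<sigma>") where "\<sigma> \<equiv> wsigma w1 w2"

lemma sigma_eq: "\<sigma> z = z * W.f z"
proof -
  have "weierstrass_E2 = weierstrass_factor 2"
    by (simp add: fun_eq_iff weierstrass_E2_def weierstrass_factor_2)
  thus ?thesis by (simp add: wsigma_def W.f_def)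
qed

lemma holomorphic_sigma: "\<sigma> holomorphic_on A"
  unfolding sigma_eq[abs_def] by (intro holomorphic_intros W.holomorphic)

lemma sigma_has_field_derivative_deriv: "(\<sigma> has_field_derivative deriv \<sigma> z) (at z)"
  using holomorphic_sigma[of UNIV] by (intro holomorphic_derivI) auto

lemma weierstrass_product_eq_0_iff: "W.f z = 0 \<longleftrightarrow> z \<in> \<Lambda> - {0}"
  using W.zero[of z] range_lattice_enum by simp

lemma sigma_eq_0_iff: "\<sigma> z = 0 \<longleftrightarrow> z \<in> \<Lambda>"
  using weierstrass_product_eq_0_iff[of z] by (auto simp: sigma_eq)

lemma weierstrass_product_has_field_derivative_deriv: "(W.f has_field_derivative deriv W.f z) (at z)"
  using W.holomorphic[of UNIV] by (intro holomorphic_derivI) auto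

lemma weierstrass_product_has_field_derivative:
  assumes z: "z \<in> -(\<Lambda> - {0})"
  shows "(W.f has_field_derivative zeta_tail z * W.f z) (at z)"
proof -
  define R where "R = norm z + 1"
  have lim: "uniform_limit (ball 0 R) (\<lambda>N x. \<Prod>k<N. weierstrass_factor 2 (x / \<omega> k)) W.f sequentially"
    using uniform_limit_on_subset[OF W.uniform_limit[of R]] by (auto simp: R_def add_nonneg_pos)
  have nz: "W.f z \<noteq> 0" using weierstrass_product_eq_0_iff[of z] z by auto
  have "(\<lambda>k. deriv (\<lambda>x. weierstrass_factor 2 (x / \<omega> k)) z / weierstrass_factor 2 (z / \<omega> k))
                      sums (deriv W.f z / W.f z)"
    by (rule logderiv_prodinf_complex_uniform_limit[OF lim _ nz]) (auto simp: R_def intro!: holomorphic_intros)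
  moreover have "deriv (\<lambda>x. weierstrass_factor 2 (x / \<omega> k)) z / weierstrass_factor 2 (z / \<omega> k) =
                   z^2 / ((\<omega> k)^2 * (z - \<omega> k))" for k
  proof -
    have zk: "z \<noteq> \<omega> k" "\<omega> k \<noteq> 0" using z lattice_enum_in_lattice[of k] lattice_enum_nonzero[of k] by auto
    from DERIV_imp_deriv[OF has_field_derivative_weierstrass_factor_2[OF zk]] show ?thesis
      using zk by simp
  qed
  ultimately have "deriv W.f z / W.f z = zeta_tail z" by (simp add: zeta_tail_def sums_iff)
  with nz have "deriv W.f z = zeta_tail z * W.f z" by (simp add: field_simps)
  with weierstrass_product_has_field_derivative_deriv show ?thesis by metis
qed

lemma weierstrass_product_even: "W.f (-z) = W.f z"
proof (cases "z \<in> -(\<Lambda> - {0})")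
  case False
  thus ?thesis using weierstrass_product_eq_0_iff[of z] weierstrass_product_eq_0_iff[of "-z"] by simp
next
  case True
  have nz: "W.f y \<noteq> 0" if "y \<in> -(\<Lambda> - {0})" for y using that weierstrass_product_eq_0_iff by auto
  have "((\<lambda>z. W.f z / W.f (-z)) has_field_derivative 0) (at x)" if x: "x \<in> -(\<Lambda> - {0})" for x
  proof -
    have "-x \<in> -(\<Lambda> - {0})" using x by auto
    have "((\<lambda>z. W.f (-z)) has_field_derivative zeta_tail (-x) * W.f (-x) * -1) (at x)"
      by (rule DERIV_chain2[where g = uminus, OF weierstrass_product_has_field_derivative[OF \<open>-x \<in> _\<close>]])
         (auto intro!: derivative_eq_intros)
    from DERIV_divide[OF weierstrass_product_has_field_derivative[OF x] this nz[OF \<open>-x \<in> _\<close>]]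
    show ?thesis using zeta_tail_odd[OF x] by (simp add: algebra_simps)
  qed
  from DERIV_zero_connected_imp_eq[OF open_nonzero_lattice_complement
      connected_nonzero_lattice_complement this True, of 0]
  show ?thesis using nz[of "-z"] True by (simp add: W.f_def field_simps)
qed

lemma sigma_odd: "\<sigma> (-z) = - \<sigma> z"
  by (simp add: sigma_eq weierstrass_product_even)

lemma deriv_weierstrass_product_0: "deriv W.f 0 = 0"
proof -
  note d = weierstrass_product_has_field_derivative_deriv
  have "((\<lambda>z. W.f (-z)) has_field_derivative deriv W.f (-0) * -1) (at 0)"
    by (rule DERIV_chain2[where g = uminus, OF d]) (auto intro!: derivative_eq_intros)
  hence "(W.f has_field_derivative - deriv W.f 0) (at 0)" by (simp add: weierstrass_product_even)
  from DERIV_unique[OF d this] show ?thesis by simp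
qed

lemma deriv_sigma_even: "deriv \<sigma> (-z) = deriv \<sigma> z"
proof -
  have "((\<lambda>z. \<sigma> (-z)) has_field_derivative deriv \<sigma> (-z) * -1) (at z)"
    by (rule DERIV_chain2[where g = uminus, OF sigma_has_field_derivative_deriv])
       (auto intro!: derivative_eq_intros)
  hence "((\<lambda>z. - \<sigma> z) has_field_derivative - deriv \<sigma> (-z)) (at z)" by (simp add: sigma_odd)
  from DERIV_unique[OF DERIV_minus[OF sigma_has_field_derivative_deriv] this] show ?thesis by simp
qed

lemma sigma_has_field_derivative: "z \<notin> \<Lambda> \<Longrightarrow> (\<sigma> has_field_derivative \<zeta> z * \<sigma> z) (at z)"
proof -
  assume z: "z \<notin> \<Lambda>"
  hence "((\<lambda>z. z * W.f z) has_field_derivative 1 * W.f z + zeta_tail z * W.f z * z) (at z)"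
    by (intro DERIV_mult DERIV_ident weierstrass_product_has_field_derivative) auto
  moreover have "1 * W.f z + zeta_tail z * W.f z * z = \<zeta> z * (z * W.f z)"
    using z by (auto simp: zeta_def field_simps)
  ultimately show ?thesis unfolding sigma_eq[abs_def] by (simp only:)
qed

lemma zeta_quasi_periodic:
  assumes w: "w \<in> \<Lambda>"
  obtains \<eta> where "\<And>z. z \<notin> \<Lambda> \<Longrightarrow> \<zeta> (z + w) = \<zeta> z + \<eta>"
proof -
  have "((\<lambda>z. \<zeta> (z + w) - \<zeta> z) has_field_derivative 0) (at x)" if "x \<in> -\<Lambda>" for x
  proof -
    have x: "x \<notin> \<Lambda>" "x + w \<notin> \<Lambda>" using that lattice_add_iff[OF w] by auto
    have "((\<lambda>z. \<zeta> (z + w)) has_field_derivative - \<wp> (x + w) * 1) (at x)"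
      by (rule DERIV_chain2[where g = "\<lambda>z. z + w", OF zeta_has_field_derivative[OF x(2)]])
         (auto intro!: derivative_eq_intros)
    from DERIV_diff[OF this zeta_has_field_derivative[OF x(1)]] show ?thesis
      using wp_periodic[OF x(1) w] by simp
  qed
  hence "\<zeta> (z + w) - \<zeta> z = \<zeta> (w1 / 2 + w) - \<zeta> (w1 / 2)" if "z \<notin> \<Lambda>" for z
    using DERIV_zero_connected_imp_eq[OF open_lattice_complement connected_lattice_complement]
      that half_periods_notin_lattice(1) by blast
  thus ?thesis using that[of "\<zeta> (w1 / 2 + w) - \<zeta> (w1 / 2)"] by (simp add: algebra_simps)
qed

lemma sigma_quasi_periodic:
  assumes w: "w \<in> \<Lambda>"
  obtains c \<eta> where "\<And>z. \<sigma> (z + w) = c * exp (\<eta> * z) * \<sigma> z"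
proof -
  obtain \<eta> where \<eta>: "\<And>z. z \<notin> \<Lambda> \<Longrightarrow> \<zeta> (z + w) = \<zeta> z + \<eta>" using zeta_quasi_periodic[OF w] by blast
  define R where "R z = \<sigma> (z + w) * exp (- \<eta> * z) / \<sigma> z" for z
  have nz: "\<sigma> y \<noteq> 0" if "y \<notin> \<Lambda>" for y using that sigma_eq_0_iff by auto
  have "(R has_field_derivative 0) (at x)" if "x \<in> -\<Lambda>" for x
  proof -
    have x: "x \<notin> \<Lambda>" "x + w \<notin> \<Lambda>" using that lattice_add_iff[OF w] by auto
    have "((\<lambda>z. \<sigma> (z + w)) has_field_derivative \<zeta> (x + w) * \<sigma> (x + w) * 1) (at x)"
      by (rule DERIV_chain2[where g = "\<lambda>z. z + w", OF sigma_has_field_derivative[OF x(2)]])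
         (auto intro!: derivative_eq_intros)
    moreover have "((\<lambda>z. exp (- \<eta> * z)) has_field_derivative exp (- \<eta> * x) * - \<eta>) (at x)"
      by (auto intro!: derivative_eq_intros)
    ultimately have "(R has_field_derivative
        ((\<zeta> (x + w) * \<sigma> (x + w) * 1 * exp (- \<eta> * x) + exp (- \<eta> * x) * - \<eta> * \<sigma> (x + w)) * \<sigma> x
          - \<sigma> (x + w) * exp (- \<eta> * x) * (\<zeta> x * \<sigma> x)) / (\<sigma> x * \<sigma> x)) (at x)"
      unfolding R_def[abs_def]
      by (intro DERIV_divide DERIV_mult sigma_has_field_derivative x(1) nz)
    thus ?thesis using \<eta>[OF x(1)] by (simp add: algebra_simps)
  qed
  hence const: "R z = R (w1 / 2)" if "z \<notin> \<Lambda>" for z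
    using DERIV_zero_connected_imp_eq[OF open_lattice_complement connected_lattice_complement]
      that half_periods_notin_lattice(1) by blast
  have "\<sigma> (z + w) = R (w1 / 2) * exp (\<eta> * z) * \<sigma> z" for z
  proof (cases "z \<in> \<Lambda>")
    case True
    hence "\<sigma> z = 0" "\<sigma> (z + w) = 0" using lattice_add[OF True w] by (simp_all add: sigma_eq_0_iff)
    thus ?thesis by simp
  next
    case False
    with const[OF False] nz[OF False] show ?thesis
      by (simp add: R_def exp_minus field_simps)
  qed
  thus ?thesis by (rule that)
qed

section \<open>Addition formulas\<close>

lemma entire_lattice_periodic_constant:
  assumes holo: "f holomorphic_on UNIV" and per: "\<And>z w. w \<in> \<Lambda> \<Longrightarrow> f (z + w) = f z"
  shows "f constant_on UNIV"
proof (rule Liouville_theorem[OF holo])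
  define K where "K = (\<lambda>(s, t). of_real s * w1 + of_real t * w2) ` ({0..1::real} \<times> {0..1::real})"
  have "compact K" unfolding K_def case_prod_beta
    by (intro compact_continuous_image compact_Times continuous_intros) auto
  hence "bounded (f ` K)"
    by (intro compact_imp_bounded compact_continuous_image holomorphic_on_imp_continuous_on
          holomorphic_on_subset[OF holo]) auto
  moreover have "range f \<subseteq> f ` K"
  proof clarify
    fix y
    obtain s t where y: "y = of_real s * w1 + of_real t * w2" using real_coords_exist by blast
    define k where "k = of_real (s - \<lfloor>s\<rfloor>) * w1 + of_real (t - \<lfloor>t\<rfloor>) * w2"
    have "k \<in> K" unfolding K_def k_def
      by (rule image_eqI[of _ _ "(s - \<lfloor>s\<rfloor>, t - \<lfloor>t\<rfloor>)"]) (auto simp: floor_le_iff, linarith+)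
    moreover have "f y = f k"
    proof -
      have "y = k + (of_int \<lfloor>s\<rfloor> * w1 + of_int \<lfloor>t\<rfloor> * w2)" by (simp add: y k_def algebra_simps)
      moreover have "of_int \<lfloor>s\<rfloor> * w1 + of_int \<lfloor>t\<rfloor> * w2 \<in> \<Lambda>" by (auto simp: lattice_iff)
      ultimately show ?thesis using per by simp
    qed
    ultimately show "f y \<in> f ` K" by blast
  qed
  ultimately show "bounded (range f)" using bounded_subset by blast
qed

lemma lattice_periodic_removable_constant:
  assumes holo: "H holomorphic_on -\<Lambda>"
    and per: "\<And>z w. z \<notin> \<Lambda> \<Longrightarrow> w \<in> \<Lambda> \<Longrightarrow> H (z + w) = H z"
    and H0: "H0 holomorphic_on ball 0 r" "\<And>z. z \<in> ball 0 r \<Longrightarrow> z \<noteq> 0 \<Longrightarrow> H0 z = H z"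
    and r: "r > 0"
  obtains c where "\<And>z. z \<notin> \<Lambda> \<Longrightarrow> H z = c"
proof -
  obtain r' where r': "r' > 0" "\<And>\<omega>. \<omega> \<in> \<Lambda> \<Longrightarrow> \<omega> \<noteq> 0 \<Longrightarrow> r' \<le> norm \<omega>"
    using nonzero_lattice_norm_ge by metis
  define \<delta> where "\<delta> = min r r'"
  define Hx where "Hx z = (if z \<in> \<Lambda> then H0 0 else H z)" for z
  have Hx_per: "Hx (z + w) = Hx z" if "w \<in> \<Lambda>" for z w
    using per[OF _ that, of z] lattice_add_iff[OF that, of z] by (auto simp: Hx_def)
  have "Hx analytic_on UNIV" unfolding analytic_on_def
  proof
    fix z :: complex
    show "\<exists>e>0. Hx holomorphic_on ball z e"
    proof (cases "z \<in> \<Lambda>")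
      case False
      then obtain e where e: "e > 0" "ball z e \<subseteq> -\<Lambda>" using open_lattice_complement openE by blast
      have "Hx holomorphic_on ball z e"
        by (rule holomorphic_transform[OF holomorphic_on_subset[OF holo e(2)]])
           (use e in \<open>auto simp: Hx_def\<close>)
      thus ?thesis using e(1) by blast
    next
      case True
      have "Hx y = H0 (y - z)" if "y \<in> ball z \<delta>" for y
      proof (cases "y = z")
        case False
        have y: "y - z \<in> ball 0 r" "y - z \<notin> \<Lambda>"
          using that False r'(2)[of "y - z"] by (auto simp: \<delta>_def dist_norm norm_minus_commute)
        have "Hx y = Hx (y - z)" using Hx_per[OF True, of "y - z"] by simp
        thus ?thesis using y H0(2)[of "y - z"] False by (simp add: Hx_def)
      qed (use True in \<open>simp add: Hx_def\<close>)
      moreover have "(\<lambda>y. H0 (y - z)) holomorphic_on ball z \<delta>"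
        by (rule holomorphic_on_compose_gen[OF _ H0(1), unfolded o_def])
           (auto intro: holomorphic_intros simp: \<delta>_def dist_norm)
      ultimately have "Hx holomorphic_on ball z \<delta>" using holomorphic_transform by metis
      moreover have "\<delta> > 0" using r r'(1) by (simp add: \<delta>_def)
      ultimately show ?thesis by blast
    qed
  qed
  hence "Hx constant_on UNIV"
    by (intro entire_lattice_periodic_constant analytic_imp_holomorphic Hx_per)
  then obtain c where c: "\<And>z. Hx z = c" by (auto simp: constant_on_def)
  have "H z = c" if "z \<notin> \<Lambda>" for z using c[of z] that by (simp add: Hx_def)
  thus ?thesis using that by blast
qed

lemma sigma_quotient_periodic:
  assumes x: "x \<notin> \<Lambda>" and w: "w \<in> \<Lambda>"
  shows "\<sigma> (x + w + b) * \<sigma> (x + w - b) / \<sigma> (x + w) ^ 2 = \<sigma> (x + b) * \<sigma> (x - b) / \<sigma> x ^ 2"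
proof -
  obtain c \<eta> where q: "\<And>z. \<sigma> (z + w) = c * exp (\<eta> * z) * \<sigma> z" using sigma_quasi_periodic[OF w] by blast
  have "\<sigma> (x + w) \<noteq> 0" using x lattice_add_iff[OF w, of x] sigma_eq_0_iff by auto
  hence c: "c \<noteq> 0" using q[of x] by auto
  have "\<sigma> x \<noteq> 0" using x sigma_eq_0_iff by auto
  have "\<sigma> (x + w + b) * \<sigma> (x + w - b) / \<sigma> (x + w) ^ 2 =
        (c^2 * (exp (\<eta> * (x + b)) * exp (\<eta> * (x - b))) * (\<sigma> (x + b) * \<sigma> (x - b))) /
        (c^2 * exp (\<eta> * x) ^ 2 * \<sigma> x ^ 2)"
    using q[of "x + b"] q[of "x - b"] q[of x] by (simp add: power2_eq_square algebra_simps)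
  also have "exp (\<eta> * (x + b)) * exp (\<eta> * (x - b)) = exp (\<eta> * x) ^ 2"
    by (simp add: exp_add[symmetric] power2_eq_square algebra_simps)
  finally show ?thesis using c \<open>\<sigma> x \<noteq> 0\<close> by (simp add: field_simps)
qed

text \<open>\<open>H x = \<sigma> (x + b) * \<sigma> (x - b) / \<sigma> x ^ 2 + \<sigma> b ^ 2 * (\<wp> x - \<wp> b)\<close> is elliptic, the double
  poles at the lattice cancel, and \<open>H b = 0\<close>.\<close>
theorem sigma_addition:
  assumes x: "x \<notin> \<Lambda>" and b: "b \<notin> \<Lambda>"
  shows "\<sigma> (x + b) * \<sigma> (x - b) = \<sigma> x ^ 2 * \<sigma> b ^ 2 * (\<wp> b - \<wp> x)"
proof -
  define H where "H x = \<sigma> (x + b) * \<sigma> (x - b) / \<sigma> x ^ 2 + \<sigma> b ^ 2 * (\<wp> x - \<wp> b)" for x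
  have shift_holo: "(\<lambda>x. \<sigma> (x + c)) holomorphic_on A" for c A
    by (rule holomorphic_on_compose_gen[OF _ holomorphic_sigma[of UNIV], unfolded o_def])
       (auto intro: holomorphic_intros)
  have holo: "H holomorphic_on -\<Lambda>"
    unfolding H_def using sigma_eq_0_iff shift_holo[of b] shift_holo[of "-b"]
    by (intro holomorphic_intros holomorphic_sigma holomorphic_wp) auto
  have per: "H (z + w) = H z" if "z \<notin> \<Lambda>" "w \<in> \<Lambda>" for z w
    using sigma_quotient_periodic[OF that] wp_periodic[OF that] by (simp add: H_def)
  define N where "N x = \<sigma> (x + b) * \<sigma> (x - b) + \<sigma> b ^ 2 * W.f x ^ 2" for x
  have "N holomorphic_on UNIV"
    unfolding N_def using shift_holo[of b] shift_holo[of "-b"]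
    by (intro holomorphic_intros W.holomorphic) auto
  moreover have "N 0 = 0" by (simp add: N_def sigma_odd W.f_def power2_eq_square)
  moreover have "deriv N 0 = 0"
  proof -
    note d\<sigma> = sigma_has_field_derivative_deriv and dW = weierstrass_product_has_field_derivative_deriv
    have "((\<lambda>x. \<sigma> (x + b)) has_field_derivative deriv \<sigma> (0 + b) * 1) (at 0)"
      by (rule DERIV_chain2[where g = "\<lambda>x. x + b", OF d\<sigma>]) (auto intro!: derivative_eq_intros)
    moreover have "((\<lambda>x. \<sigma> (x - b)) has_field_derivative deriv \<sigma> (0 - b) * 1) (at 0)"
      by (rule DERIV_chain2[where g = "\<lambda>x. x - b", OF d\<sigma>]) (auto intro!: derivative_eq_intros)
    ultimately have "(N has_field_derivative
        deriv \<sigma> (0 + b) * 1 * \<sigma> (0 - b) + deriv \<sigma> (0 - b) * 1 * \<sigma> (0 + b) +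
        \<sigma> b ^ 2 * (deriv W.f 0 * W.f 0 + deriv W.f 0 * W.f 0)) (at 0)"
      unfolding N_def[abs_def] power2_eq_square[of "W.f _"]
      by (intro DERIV_add DERIV_mult DERIV_cmult dW)
    moreover have "deriv \<sigma> (0 + b) * 1 * \<sigma> (0 - b) + deriv \<sigma> (0 - b) * 1 * \<sigma> (0 + b) +
        \<sigma> b ^ 2 * (deriv W.f 0 * W.f 0 + deriv W.f 0 * W.f 0) = 0"
      using deriv_sigma_even[of b] by (simp add: sigma_odd deriv_weierstrass_product_0)
    ultimately show ?thesis by (simp add: DERIV_imp_deriv)
  qed
  ultimately obtain g where g: "g holomorphic_on UNIV" "\<And>z. z \<noteq> 0 \<Longrightarrow> g z = N z / z^2"
    by (rule holomorphic_divide_square) blast+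
  obtain r where r: "r > 0" "ball 0 r \<subseteq> -(\<Lambda> - {0})"
    using open_nonzero_lattice_complement openE[of _ 0] by auto
  define H0 where "H0 x = g x / W.f x ^ 2 + \<sigma> b ^ 2 * (wp_tail x - \<wp> b)" for x
  have nz: "W.f x \<noteq> 0" if "x \<in> ball 0 r" for x using that r(2) weierstrass_product_eq_0_iff by auto
  have "H0 holomorphic_on ball 0 r"
  proof -
    have "wp_tail holomorphic_on ball 0 r"
      using r(2) wp_tail_has_field_derivative by (subst holomorphic_on_open) auto
    thus ?thesis unfolding H0_def
      using nz by (intro holomorphic_intros holomorphic_on_subset[OF g(1)] W.holomorphic) auto
  qed
  moreover have "H0 x = H x" if "x \<in> ball 0 r" "x \<noteq> 0" for x
    using that nz[OF that(1)]
    by (simp add: H_def H0_def g(2) N_def sigma_eq wp_eq_tail field_simps power2_eq_square)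
  ultimately obtain c where c: "\<And>z. z \<notin> \<Lambda> \<Longrightarrow> H z = c"
    using lattice_periodic_removable_constant[OF holo per _ _ r(1)] by metis
  have "c = 0" using c[OF b] by (simp add: H_def sigma_odd W.f_def sigma_eq)
  hence "H x = 0" using c[OF x] by simp
  moreover have "\<sigma> x \<noteq> 0" using x sigma_eq_0_iff by auto
  ultimately show ?thesis by (simp add: H_def field_simps)
qed

lemma sigma_shift_has_field_derivative:
  "z + c \<notin> \<Lambda> \<Longrightarrow> ((\<lambda>z. \<sigma> (z + c)) has_field_derivative \<zeta> (z + c) * \<sigma> (z + c)) (at z)"
  using sigma_has_field_derivative DERIV_shift by blast

text \<open>The logarithmic derivative in \<open>u\<close> of the addition formula for \<open>\<sigma>\<close>.\<close>
lemma zeta_addition: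
  assumes u: "u \<notin> \<Lambda>" and b: "b \<notin> \<Lambda>" and ub: "u + b \<notin> \<Lambda>" "u - b \<notin> \<Lambda>"
  shows "\<wp> b \<noteq> \<wp> u" "\<zeta> (u + b) + \<zeta> (u - b) = 2 * \<zeta> u - \<wp>' u / (\<wp> b - \<wp> u)"
proof -
  have add: "\<sigma> (v + b) * \<sigma> (v - b) = \<sigma> v ^ 2 * \<sigma> b ^ 2 * (\<wp> b - \<wp> v)" if "v \<in> -\<Lambda>" for v
    using sigma_addition[of v b] that b by auto
  have nz: "\<sigma> (u + b) * \<sigma> (u - b) \<noteq> 0" using ub sigma_eq_0_iff by auto
  thus ne: "\<wp> b \<noteq> \<wp> u" using add[of u] u by auto
  define Z K S where "Z = \<zeta> (u + b) + \<zeta> (u - b)" and "K = \<wp> b - \<wp> u"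
    and "S = \<sigma> u ^ 2 * \<sigma> b ^ 2"
  have "((\<lambda>v. \<sigma> (v + b) * \<sigma> (v - b)) has_field_derivative
          (\<zeta> (u + b) + \<zeta> (u - b)) * (\<sigma> (u + b) * \<sigma> (u - b))) (at u)"
    using DERIV_mult[OF sigma_shift_has_field_derivative[OF ub(1)]
                        sigma_shift_has_field_derivative[of u "-b"]] ub(2)
    by (simp add: algebra_simps)
  hence "((\<lambda>v. \<sigma> v ^ 2 * \<sigma> b ^ 2 * (\<wp> b - \<wp> v)) has_field_derivative
          (\<zeta> (u + b) + \<zeta> (u - b)) * (\<sigma> (u + b) * \<sigma> (u - b))) (at u)"
    by (rule has_field_derivative_transform_within_open[OF _ open_lattice_complement])
       (use u add in auto)
  moreover have "((\<lambda>v. \<sigma> v ^ 2 * \<sigma> b ^ 2 * (\<wp> b - \<wp> v)) has_field_derivative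
      2 * \<zeta> u * (\<sigma> u ^ 2 * \<sigma> b ^ 2 * (\<wp> b - \<wp> u)) - \<sigma> u ^ 2 * \<sigma> b ^ 2 * \<wp>' u) (at u)"
    using u by (auto intro!: derivative_eq_intros sigma_has_field_derivative wp_has_field_derivative
                     simp: algebra_simps power2_eq_square)
  ultimately have "Z * (\<sigma> (u + b) * \<sigma> (u - b)) = 2 * \<zeta> u * (S * K) - S * \<wp>' u"
    unfolding Z_def K_def S_def by (intro DERIV_unique)
  hence "S * (Z * K - (2 * \<zeta> u * K - \<wp>' u)) = 0"
    unfolding add[of u, simplified, OF u, folded S_def K_def] by (simp add: algebra_simps)
  moreover have "S \<noteq> 0" using u b sigma_eq_0_iff by (simp add: S_def)
  ultimately have "Z * K = 2 * \<zeta> u * K - \<wp>' u" by simp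
  moreover have "K \<noteq> 0" using ne by (simp add: K_def)
  ultimately show "\<zeta> (u + b) + \<zeta> (u - b) = 2 * \<zeta> u - \<wp>' u / (\<wp> b - \<wp> u)"
    by (simp add: Z_def K_def field_simps)
qed

lemma wp_addition:
  assumes x: "x \<notin> \<Lambda>" and \<beta>: "\<beta> \<notin> \<Lambda>" and x\<beta>: "x + \<beta> \<notin> \<Lambda>" "x - \<beta> \<notin> \<Lambda>"
  shows "\<wp> x \<noteq> \<wp> \<beta>" "\<wp> (x + \<beta>) - \<wp> (x - \<beta>) = - \<wp>' x * \<wp>' \<beta> / (\<wp> x - \<wp> \<beta>)^2"
proof -
  define V where "V = -\<Lambda> \<inter> (\<lambda>b. x + b) -` (-\<Lambda>) \<inter> (\<lambda>b. x - b) -` (-\<Lambda>)"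
  have V: "open V" "\<beta> \<in> V" unfolding V_def using \<beta> x\<beta>
    by (auto intro!: open_Int open_lattice_complement continuous_open_vimage continuous_intros)
  show ne: "\<wp> x \<noteq> \<wp> \<beta>" using zeta_addition(1)[OF x \<beta> x\<beta>] by simp
  have "((\<lambda>b. \<zeta> (x + b)) has_field_derivative - \<wp> (x + \<beta>) * 1) (at \<beta>)"
    by (rule DERIV_chain2[where g = "\<lambda>b. x + b", OF zeta_has_field_derivative[OF x\<beta>(1)]])
       (auto intro!: derivative_eq_intros)
  moreover have "((\<lambda>b. \<zeta> (x - b)) has_field_derivative - \<wp> (x - \<beta>) * -1) (at \<beta>)"
    by (rule DERIV_chain2[where g = "\<lambda>b. x - b", OF zeta_has_field_derivative[OF x\<beta>(2)]])
       (auto intro!: derivative_eq_intros)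
  ultimately have "((\<lambda>b. \<zeta> (x + b) + \<zeta> (x - b)) has_field_derivative - \<wp> (x + \<beta>) + \<wp> (x - \<beta>)) (at \<beta>)"
    using DERIV_add by fastforce
  hence "((\<lambda>b. 2 * \<zeta> x - \<wp>' x / (\<wp> b - \<wp> x)) has_field_derivative - \<wp> (x + \<beta>) + \<wp> (x - \<beta>)) (at \<beta>)"
    by (rule has_field_derivative_transform_within_open[OF _ V])
       (use zeta_addition(2)[OF x] in \<open>auto simp: V_def\<close>)
  moreover have "((\<lambda>b. 2 * \<zeta> x - \<wp>' x / (\<wp> b - \<wp> x)) has_field_derivative
      \<wp>' x * \<wp>' \<beta> / (\<wp> \<beta> - \<wp> x)^2) (at \<beta>)"
    using ne \<beta> by (auto intro!: derivative_eq_intros wp_has_field_derivative simp: power2_eq_square)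
  ultimately have "- \<wp> (x + \<beta>) + \<wp> (x - \<beta>) = \<wp>' x * \<wp>' \<beta> / (\<wp> \<beta> - \<wp> x)^2"
    by (rule DERIV_unique)
  thus "\<wp> (x + \<beta>) - \<wp> (x - \<beta>) = - \<wp>' x * \<wp>' \<beta> / (\<wp> x - \<wp> \<beta>)^2"
    by (simp add: power2_commute algebra_simps)
qed

lemma tendsto_square_mult_wp: "((\<lambda>y. y^2 * \<wp> y) \<longlongrightarrow> 1) (at 0)"
proof -
  have "isCont wp_tail 0"
    using wp_tail_has_field_derivative[of 0] by (auto intro: DERIV_isCont)
  hence "((\<lambda>y. 1 + y^2 * wp_tail y) \<longlongrightarrow> 1 + 0^2 * wp_tail 0) (at 0)"
    by (intro tendsto_intros) (auto simp: isCont_def)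
  moreover have "eventually (\<lambda>y. 1 + y^2 * wp_tail y = y^2 * \<wp> y) (at 0)"
    by (auto simp: eventually_at_filter wp_eq_tail field_simps)
  ultimately show ?thesis by (auto intro: Lim_transform_eventually)
qed

text \<open>If \<open>\<wp>' \<beta> = 0\<close>, the addition formula gives \<open>\<wp> (y + 2\<beta>) = \<wp> y\<close> near \<open>y = 0\<close>, contradicting
  the double pole of \<open>\<wp>\<close> at \<open>0\<close>.\<close>
lemma wp'_nonzero:
  assumes \<beta>: "\<beta> \<notin> \<Lambda>" "2 * \<beta> \<notin> \<Lambda>"
  shows "\<wp>' \<beta> \<noteq> 0"
proof
  assume "\<wp>' \<beta> = 0"
  have "eventually (\<lambda>y. y + 0 \<notin> \<Lambda> \<and> y + \<beta> \<notin> \<Lambda> \<and> y + 2 * \<beta> \<notin> \<Lambda>) (at 0)"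
    by (intro eventually_conj eventually_notin_lattice)
  hence "eventually (\<lambda>y. y^2 * \<wp> y = y^2 * \<wp> (y + 2 * \<beta>)) (at 0)"
  proof eventually_elim
    case (elim y)
    hence "y + \<beta> \<notin> \<Lambda>" "(y + \<beta>) + \<beta> \<notin> \<Lambda>" "(y + \<beta>) - \<beta> \<notin> \<Lambda>" by (simp_all add: algebra_simps)
    from wp_addition(2)[OF this(1) \<beta>(1) this(2,3)] \<open>\<wp>' \<beta> = 0\<close>
    show ?case by (simp add: algebra_simps)
  qed
  hence "((\<lambda>y. y^2 * \<wp> (y + 2 * \<beta>)) \<longlongrightarrow> 1) (at 0)"
    using tendsto_square_mult_wp by (rule Lim_transform_eventually[rotated])
  moreover have "isCont \<wp> (2 * \<beta>)"
    using wp_has_field_derivative[OF \<beta>(2)] by (rule DERIV_isCont)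
  hence "((\<lambda>y. y^2 * \<wp> (y + 2 * \<beta>)) \<longlongrightarrow> 0^2 * \<wp> (0 + 2 * \<beta>)) (at 0)"
    by (intro tendsto_intros isCont_tendsto_compose[of _ \<wp>]) auto
  ultimately show False using tendsto_unique[of "at (0::complex)"] by fastforce
qed

end

section \<open>The lattice flow\<close>

lemma tder_comp:
  assumes "f differentiable (at t)" "(g has_field_derivative g') (at (f t))"
  shows "tder (\<lambda>s. g (f s)) t = g' * tder f t"
proof -
  have "(f has_vector_derivative vector_derivative f (at t)) (at t)"
    using assms(1) vector_derivative_works by blast
  from field_vector_diff_chain_at[OF this assms(2)]
  have "((\<lambda>s. g (f s)) has_vector_derivative (vector_derivative f (at t) * g')) (at t)"
    by (simp add: o_def)
  thus ?thesis unfolding tder_def by (simp add: vector_derivative_at mult.commute)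
qed

lemma smooth_rc_imp_differentiable: "smooth_rc f \<Longrightarrow> f differentiable (at t)"
  unfolding smooth_rc_def by (metis funpow_0)

lemma rho_commute: "rho w1 w2 u z w \<beta> = rho w1 w2 w z u \<beta>"
  by (simp add: rho_def algebra_simps)

lemma divide_common_factors:
  fixes A B p1 p2 m1 m2 :: "'a::field"
  assumes "A \<noteq> 0" "B \<noteq> 0" "p2 \<noteq> 0" "m1 \<noteq> 0" "m2 \<noteq> 0"
  shows "(A * p1 / (B * m1)) / (A * p2 / (B * m2)) = (p1 * m2) / (m1 * p2)"
  using assms by (simp add: field_simps)

lemma cayley_eq_cross_ratio_iff:
  fixes X u v p m d c :: complex
  assumes "X \<noteq> 1" "v \<noteq> m" "u \<noteq> p" "p \<noteq> m" "u \<noteq> v" "d \<noteq> 0" and c: "c * (p - m) = - d"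
  shows "(X + 1) / (X - 1) = ((v - p) * (u - m)) / ((v - m) * (u - p)) \<longleftrightarrow>
         d * X = 2 * (c * (u * v - (p + m) * (u + v) / 2 + p * m)) / (u - v)"
proof -
  define Q where "Q = u * v - (p + m) * (u + v) / 2 + p * m"
  have "(X + 1) / (X - 1) = ((v - p) * (u - m)) / ((v - m) * (u - p)) \<longleftrightarrow>
        (X + 1) * ((v - m) * (u - p)) = ((v - p) * (u - m)) * (X - 1)"
    using assms by (intro frac_eq_eq) auto
  also have "\<dots> \<longleftrightarrow> (X + 1) * ((v - m) * (u - p)) - (X - 1) * ((v - p) * (u - m)) = 0"
    by (simp only: right_minus_eq mult.commute[of "(v - p) * (u - m)"])
  also have "(X + 1) * ((v - m) * (u - p)) - (X - 1) * ((v - p) * (u - m)) = X * (p - m) * (u - v) + 2 * Q"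
    unfolding Q_def by (simp add: algebra_simps)
  also have "X * (p - m) * (u - v) + 2 * Q = (d * X * (u - v) - 2 * (c * Q)) * (p - m) / d"
  proof -
    have "(d * X * (u - v) - 2 * (c * Q)) * (p - m) = d * X * (u - v) * (p - m) - 2 * Q * (c * (p - m))"
      by (simp add: algebra_simps)
    also have "\<dots> = d * (X * (p - m) * (u - v) + 2 * Q)" unfolding c by (simp add: algebra_simps)
    finally show ?thesis using assms(6) by simp
  qed
  also have "\<dots> = 0 \<longleftrightarrow> d * X * (u - v) = 2 * (c * Q)"
    using assms(4,6) by simp
  also have "\<dots> \<longleftrightarrow> d * X = 2 * (c * Q) / (u - v)"
    using assms(5) by (simp add: eq_divide_eq)
  finally show ?thesis unfolding Q_def .
qed

context period_lattice
begin

lemma Fsig_eq_sigma_wp: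
  assumes "x1 \<notin> \<Lambda>" "x0 + \<alpha> \<notin> \<Lambda>" "x0 - \<alpha> \<notin> \<Lambda>" and ok: "Fsig_ok w1 w2 x0 x1 \<alpha>"
  shows "Fsig w1 w2 x0 x1 \<alpha> = \<sigma> (x0 + \<alpha>) ^ 2 * (\<wp> x1 - \<wp> (x0 + \<alpha>)) / (\<sigma> (x0 - \<alpha>) ^ 2 * (\<wp> x1 - \<wp> (x0 - \<alpha>)))"
    and "\<wp> x1 \<noteq> \<wp> (x0 + \<alpha>)" "\<wp> x1 \<noteq> \<wp> (x0 - \<alpha>)"
proof -
  have plus: "\<sigma> (x0 + x1 + \<alpha>) * \<sigma> (x0 - x1 + \<alpha>) = \<sigma> (x0 + \<alpha>) ^ 2 * \<sigma> x1 ^ 2 * (\<wp> x1 - \<wp> (x0 + \<alpha>))"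
    using sigma_addition[of "x0 + \<alpha>" x1] assms(1,2) by (simp add: algebra_simps)
  have minus: "\<sigma> (x0 + x1 - \<alpha>) * \<sigma> (x0 - x1 - \<alpha>) = \<sigma> (x0 - \<alpha>) ^ 2 * \<sigma> x1 ^ 2 * (\<wp> x1 - \<wp> (x0 - \<alpha>))"
    using sigma_addition[of "x0 - \<alpha>" x1] assms(1,3) by (simp add: algebra_simps)
  have "\<sigma> x1 \<noteq> 0" using assms(1) sigma_eq_0_iff by auto
  with plus minus ok show "\<wp> x1 \<noteq> \<wp> (x0 + \<alpha>)" "\<wp> x1 \<noteq> \<wp> (x0 - \<alpha>)"
    and "Fsig w1 w2 x0 x1 \<alpha> = \<sigma> (x0 + \<alpha>) ^ 2 * (\<wp> x1 - \<wp> (x0 + \<alpha>)) / (\<sigma> (x0 - \<alpha>) ^ 2 * (\<wp> x1 - \<wp> (x0 - \<alpha>)))"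
    by (auto simp: Fsig_def Fsig_ok_def)
qed

lemma Fsig_ratio:
  assumes "a \<notin> \<Lambda>" "b \<notin> \<Lambda>" "z + \<beta> \<notin> \<Lambda>" "z - \<beta> \<notin> \<Lambda>" "Fsig_ok w1 w2 z a \<beta>" "Fsig_ok w1 w2 z b \<beta>"
  shows "Fsig w1 w2 z a \<beta> / Fsig w1 w2 z b \<beta> =
    ((\<wp> a - \<wp> (z + \<beta>)) * (\<wp> b - \<wp> (z - \<beta>))) / ((\<wp> a - \<wp> (z - \<beta>)) * (\<wp> b - \<wp> (z + \<beta>)))"
proof -
  have \<sigma>: "\<sigma> (z + \<beta>) \<noteq> 0" "\<sigma> (z - \<beta>) \<noteq> 0" using assms(3,4) sigma_eq_0_iff by auto
  show ?thesis
    unfolding Fsig_eq_sigma_wp(1)[OF assms(1,3,4,5)] Fsig_eq_sigma_wp(1)[OF assms(2,3,4,6)]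
    by (rule divide_common_factors)
       (use Fsig_eq_sigma_wp(2,3)[OF assms(1,3,4,5)] Fsig_eq_sigma_wp(2,3)[OF assms(2,3,4,6)] \<sigma> in auto)
qed

lemma wp_velocity_iff_Fsig_ratio:
  assumes \<beta>: "\<beta> \<notin> \<Lambda>" "\<wp>' \<beta> \<noteq> 0" and D: "D \<noteq> 1"
    and z: "z \<notin> \<Lambda>" "\<wp>' z \<noteq> 0" "z + \<beta> \<notin> \<Lambda>" "z - \<beta> \<notin> \<Lambda>"
    and ab: "a \<notin> \<Lambda>" "b \<notin> \<Lambda>" "Fsig_ok w1 w2 z a \<beta>" "Fsig_ok w1 w2 z b \<beta>" "\<wp> b \<noteq> \<wp> a"
  shows "(D + 1) / (D - 1) = Fsig w1 w2 z a \<beta> / Fsig w1 w2 z b \<beta> \<longleftrightarrow>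
         \<wp>' z * D = 2 * rho w1 w2 (\<wp> b) z (\<wp> a) \<beta> / (\<wp> b - \<wp> a)"
proof -
  define c where "c = (\<wp> z - \<wp> \<beta>)^2 / \<wp>' \<beta>"
  have ne: "\<wp> z \<noteq> \<wp> \<beta>"
    and add: "\<wp> (z + \<beta>) - \<wp> (z - \<beta>) = - \<wp>' z * \<wp>' \<beta> / (\<wp> z - \<wp> \<beta>)^2"
    using wp_addition[OF z(1) \<beta>(1) z(3,4)] by auto
  hence c: "c * (\<wp> (z + \<beta>) - \<wp> (z - \<beta>)) = - \<wp>' z" using \<beta>(2) by (simp add: c_def field_simps)
  hence "\<wp> (z + \<beta>) \<noteq> \<wp> (z - \<beta>)" using z(2) by auto
  moreover have "rho w1 w2 (\<wp> b) z (\<wp> a) \<beta> = c * (\<wp> b * \<wp> a - (\<wp> (z + \<beta>) + \<wp> (z - \<beta>)) *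
                   (\<wp> b + \<wp> a) / 2 + \<wp> (z + \<beta>) * \<wp> (z - \<beta>))"
    by (simp add: rho_def c_def)
  ultimately show ?thesis
    unfolding Fsig_ratio[OF ab(1,2) z(3,4) ab(3,4)]
    using cayley_eq_cross_ratio_iff[OF D _ _ _ ab(5) z(2) c] Fsig_eq_sigma_wp(2,3)[OF ab(1) z(3,4) ab(3)]
      Fsig_eq_sigma_wp(2,3)[OF ab(2) z(3,4) ab(4)]
    by auto
qed

text \<open>The second equivalence is the first one for the reversed velocity \<open>- tder f t\<close>; it is the
  shape of the \<open>y\<close>-equations.\<close>
lemma tder_wp_iff_Fsig_ratio:
  assumes \<beta>: "\<beta> \<notin> \<Lambda>" "\<wp>' \<beta> \<noteq> 0" and f: "smooth_rc f" "(tder f t)^2 \<noteq> 1"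
    and z: "f t \<notin> \<Lambda>" "\<wp>' (f t) \<noteq> 0" "f t + \<beta> \<notin> \<Lambda>" "f t - \<beta> \<notin> \<Lambda>"
    and ab: "a \<notin> \<Lambda>" "b \<notin> \<Lambda>" "Fsig_ok w1 w2 (f t) a \<beta>" "Fsig_ok w1 w2 (f t) b \<beta>" "\<wp> b \<noteq> \<wp> a"
  shows "(tder f t + 1) / (tder f t - 1) = Fsig w1 w2 (f t) a \<beta> / Fsig w1 w2 (f t) b \<beta> \<longleftrightarrow>
           tder (\<lambda>s. \<wp> (f s)) t = 2 * rho w1 w2 (\<wp> b) (f t) (\<wp> a) \<beta> / (\<wp> b - \<wp> a)"
    and "(tder f t - 1) / (tder f t + 1) = Fsig w1 w2 (f t) a \<beta> / Fsig w1 w2 (f t) b \<beta> \<longleftrightarrow>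
           tder (\<lambda>s. \<wp> (f s)) t = 2 * rho w1 w2 (\<wp> a) (f t) (\<wp> b) \<beta> / (\<wp> a - \<wp> b)"
proof -
  have chain: "tder (\<lambda>s. \<wp> (f s)) t = \<wp>' (f t) * tder f t"
    using f(1) z(1) by (intro tder_comp smooth_rc_imp_differentiable wp_has_field_derivative)
  have "tder f t \<noteq> 1" using f(2) by auto
  have "- tder f t \<noteq> 1"
  proof
    assume minus_one: "- tder f t = 1"
    have "(tder f t)^2 = (- tder f t)^2" by (simp only: power2_minus)
    also have "\<dots> = 1" unfolding minus_one by simp
    finally show False using f(2) by contradiction
  qed
  note iff = wp_velocity_iff_Fsig_ratio[OF \<beta> _ z ab]
  show "(tder f t + 1) / (tder f t - 1) = Fsig w1 w2 (f t) a \<beta> / Fsig w1 w2 (f t) b \<beta> \<longleftrightarrow>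
          tder (\<lambda>s. \<wp> (f s)) t = 2 * rho w1 w2 (\<wp> b) (f t) (\<wp> a) \<beta> / (\<wp> b - \<wp> a)"
    using iff[OF \<open>tder f t \<noteq> 1\<close>] chain by simp
  have "- tder f t + 1 = - (tder f t - 1)" "- tder f t - 1 = - (tder f t + 1)" by simp_all
  hence "(- tder f t + 1) / (- tder f t - 1) = (tder f t - 1) / (tder f t + 1)"
    by (simp only: minus_divide_divide)
  show "(tder f t - 1) / (tder f t + 1) = Fsig w1 w2 (f t) a \<beta> / Fsig w1 w2 (f t) b \<beta> \<longleftrightarrow>
          tder (\<lambda>s. \<wp> (f s)) t = 2 * rho w1 w2 (\<wp> a) (f t) (\<wp> b) \<beta> / (\<wp> a - \<wp> b)"
  proof -
    have "2 * rho w1 w2 (\<wp> b) (f t) (\<wp> a) \<beta> / (\<wp> b - \<wp> a) =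
            - (2 * rho w1 w2 (\<wp> a) (f t) (\<wp> b) \<beta> / (\<wp> a - \<wp> b))"
      by (subst rho_commute) (simp add: divide_minus_right[symmetric])
    with iff[OF \<open>- tder f t \<noteq> 1\<close>] chain \<open>(- tder f t + 1) / (- tder f t - 1) = _\<close> show ?thesis
      by simp
  qed
qed

end

lemma half_lattice_nondeg: "lattice_nondeg w1 w2 \<Longrightarrow> lattice_nondeg (w1 / 2) (w2 / 2)"
  by (auto simp: lattice_nondeg_def)

lemma lattice_subset_half_lattice: "lattice w1 w2 \<subseteq> lattice (w1 / 2) (w2 / 2)"
proof
  fix z assume "z \<in> lattice w1 w2"
  then obtain m n :: int where "z = of_int m * w1 + of_int n * w2" by (auto simp: lattice_def)
  hence "z = of_int (2 * m) * (w1 / 2) + of_int (2 * n) * (w2 / 2)" by simp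
  thus "z \<in> lattice (w1 / 2) (w2 / 2)" unfolding lattice_def by blast
qed

lemma double_in_lattice_iff: "2 * \<beta> \<in> lattice w1 w2 \<longleftrightarrow> \<beta> \<in> lattice (w1 / 2) (w2 / 2)"
proof -
  have "2 * \<beta> = of_int m * w1 + of_int n * w2 \<longleftrightarrow> \<beta> = of_int m * (w1 / 2) + of_int n * (w2 / 2)" for m n
    by (auto simp: field_simps)
  thus ?thesis by (simp add: lattice_def)
qed

theorem mainTheorem14:
  fixes w1 w2 :: complex
  assumes "lattice_nondeg w1 w2"
  shows "\<exists>S :: complex set. (\<forall>z. \<not> z islimpt S) \<and>
    (\<forall>\<beta>. \<beta> \<notin> S \<longrightarrow>
      (\<forall>(x :: int \<Rightarrow> real \<Rightarrow> complex) (y :: int \<Rightarrow> real \<Rightarrow> complex).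
        (\<forall>k. smooth_rc (x k) \<and> smooth_rc (y k)) \<longrightarrow>
        (\<forall>k t. (tder (x k) t)^2 \<noteq> 1 \<and> (tder (y k) t)^2 \<noteq> 1) \<longrightarrow>
        (\<forall>k t. x k t \<notin> lattice w1 w2 \<and> y k t \<notin> lattice w1 w2) \<longrightarrow>
        (\<forall>k t. wp' w1 w2 (x k t) \<noteq> 0 \<and> wp' w1 w2 (y k t) \<noteq> 0) \<longrightarrow>
        (\<forall>k t. x k t + \<beta> \<notin> lattice w1 w2 \<and> x k t - \<beta> \<notin> lattice w1 w2 \<and>
               y k t + \<beta> \<notin> lattice w1 w2 \<and> y k t - \<beta> \<notin> lattice w1 w2) \<longrightarrow>
        (\<forall>k t. Fsig_ok w1 w2 (x k t) (y k t) \<beta> \<and> Fsig_ok w1 w2 (x k t) (x (k+1) t) \<beta> \<and>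
               Fsig_ok w1 w2 (y k t) (x k t) \<beta> \<and> Fsig_ok w1 w2 (y k t) (y (k-1) t) \<beta>) \<longrightarrow>
        (\<forall>k t. wp w1 w2 (x (k+1) t) \<noteq> wp w1 w2 (y k t) \<and>
               wp w1 w2 (x k t) \<noteq> wp w1 w2 (y (k-1) t)) \<longrightarrow>
        ((\<forall>k t.
            (tder (x k) t + 1) / (tder (x k) t - 1) =
              Fsig w1 w2 (x k t) (y k t) \<beta> / Fsig w1 w2 (x k t) (x (k+1) t) \<beta> \<and>
            (tder (y k) t - 1) / (tder (y k) t + 1) =
              Fsig w1 w2 (y k t) (x k t) \<beta> / Fsig w1 w2 (y k t) (y (k-1) t) \<beta>)
         \<longleftrightarrow>
         (\<forall>k t.
            tder (\<lambda>s. wp w1 w2 (x k s)) t =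
              2 * rho w1 w2 (wp w1 w2 (x (k+1) t)) (x k t) (wp w1 w2 (y k t)) \<beta>
                / (wp w1 w2 (x (k+1) t) - wp w1 w2 (y k t)) \<and>
            tder (\<lambda>s. wp w1 w2 (y k s)) t =
              2 * rho w1 w2 (wp w1 w2 (x k t)) (y k t) (wp w1 w2 (y (k-1) t)) \<beta>
                / (wp w1 w2 (x k t) - wp w1 w2 (y (k-1) t))))))"
proof -
  interpret period_lattice w1 w2 by unfold_locales (fact assms)
  show ?thesis
  proof (intro exI[of _ "lattice (w1 / 2) (w2 / 2)"] conjI allI impI)
    show "\<not> z islimpt lattice (w1 / 2) (w2 / 2)" for z
      using period_lattice.not_islimpt_lattice half_lattice_nondeg[OF assms]
      by (simp add: period_lattice_def)
    fix \<beta> and x y :: "int \<Rightarrow> real \<Rightarrow> complex"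
    assume \<beta>: "\<beta> \<notin> lattice (w1 / 2) (w2 / 2)"
      and smooth: "\<forall>k. smooth_rc (x k) \<and> smooth_rc (y k)"
      and speed: "\<forall>k t. (tder (x k) t)^2 \<noteq> 1 \<and> (tder (y k) t)^2 \<noteq> 1"
      and off: "\<forall>k t. x k t \<notin> \<Lambda> \<and> y k t \<notin> \<Lambda>"
      and crit: "\<forall>k t. \<wp>' (x k t) \<noteq> 0 \<and> \<wp>' (y k t) \<noteq> 0"
      and shift: "\<forall>k t. x k t + \<beta> \<notin> \<Lambda> \<and> x k t - \<beta> \<notin> \<Lambda> \<and> y k t + \<beta> \<notin> \<Lambda> \<and> y k t - \<beta> \<notin> \<Lambda>"
      and ok: "\<forall>k t. Fsig_ok w1 w2 (x k t) (y k t) \<beta> \<and> Fsig_ok w1 w2 (x k t) (x (k+1) t) \<beta> \<and>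
               Fsig_ok w1 w2 (y k t) (x k t) \<beta> \<and> Fsig_ok w1 w2 (y k t) (y (k-1) t) \<beta>"
      and ne: "\<forall>k t. \<wp> (x (k+1) t) \<noteq> \<wp> (y k t) \<and> \<wp> (x k t) \<noteq> \<wp> (y (k-1) t)"
    have \<beta>': "\<beta> \<notin> \<Lambda>" "\<wp>' \<beta> \<noteq> 0"
      using \<beta> lattice_subset_half_lattice wp'_nonzero double_in_lattice_iff by blast+
    have "(tder (x k) t + 1) / (tder (x k) t - 1) = Fsig w1 w2 (x k t) (y k t) \<beta> / Fsig w1 w2 (x k t) (x (k+1) t) \<beta>
          \<longleftrightarrow> tder (\<lambda>s. \<wp> (x k s)) t =
                2 * rho w1 w2 (\<wp> (x (k+1) t)) (x k t) (\<wp> (y k t)) \<beta> / (\<wp> (x (k+1) t) - \<wp> (y k t))" for k t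
      by (rule tder_wp_iff_Fsig_ratio(1)[OF \<beta>']) (use smooth speed off crit shift ok ne in auto)
    moreover have "(tder (y k) t - 1) / (tder (y k) t + 1) = Fsig w1 w2 (y k t) (x k t) \<beta> / Fsig w1 w2 (y k t) (y (k-1) t) \<beta>
          \<longleftrightarrow> tder (\<lambda>s. \<wp> (y k s)) t =
                2 * rho w1 w2 (\<wp> (x k t)) (y k t) (\<wp> (y (k-1) t)) \<beta> / (\<wp> (x k t) - \<wp> (y (k-1) t))" for k t
      by (rule tder_wp_iff_Fsig_ratio(2)[OF \<beta>'])
         (use smooth speed off crit shift ok ne[rule_format, of k t] in auto)
    ultimately show "(\<forall>k t.
            (tder (x k) t + 1) / (tder (x k) t - 1) =
              Fsig w1 w2 (x k t) (y k t) \<beta> / Fsig w1 w2 (x k t) (x (k+1) t) \<beta> \<and>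
            (tder (y k) t - 1) / (tder (y k) t + 1) =
              Fsig w1 w2 (y k t) (x k t) \<beta> / Fsig w1 w2 (y k t) (y (k-1) t) \<beta>)
         \<longleftrightarrow>
         (\<forall>k t.
            tder (\<lambda>s. wp w1 w2 (x k s)) t =
              2 * rho w1 w2 (wp w1 w2 (x (k+1) t)) (x k t) (wp w1 w2 (y k t)) \<beta>
                / (wp w1 w2 (x (k+1) t) - wp w1 w2 (y k t)) \<and>
            tder (\<lambda>s. wp w1 w2 (y k s)) t =
              2 * rho w1 w2 (wp w1 w2 (x k t)) (y k t) (wp w1 w2 (y (k-1) t)) \<beta>
                / (wp w1 w2 (x k t) - wp w1 w2 (y (k-1) t)))"
      by blast
  qed
qed

end
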